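(* The axiom system $\mathbf{AX}^{lp}=\{\mathrm{Taut},\mathrm{MP},\mathrm{Ineq},E5,E6,E7,E8\}$ is sound and complete for $\mathcal{L}^E$ with respect to $\mathcal{M}^{lp}$: a formula of $\mathcal{L}^E$ is provable in $\mathbf{AX}^{lp}$ iff it is true in every lower probability structure.
   Context: Language $\mathcal L^E$: fix primitive propositions $\Phi_0$; propositional formulas built with $\neg,\wedge$; $\mathit{true}$ a tautology, $\mathit{false}=\neg\mathit{true}$. A propositional gamble is $b_1\phi_1+\cdots+b_n\phi_n$ (integers $b_i$); sums and integer multiples are formed termwise, $\phi$ identified with $1\phi$. Formulas are Boolean combinations of expectation inequalities $a_1e(\gamma_1)+\cdots+a_ke(\gamma_k)\ge b$ (integers $a_i,b$); $t\le b$ abbreviates $-t\ge-b$, $t>b$ abbreviates $\neg(t\le b)$, $t=b$ abbreviates $t\ge b\wedge t\le b$, $t_1\ge t_2$ abbreviates $t_1-t_2\ge0$. A lower probability structure is $M=(W,\mathcal F,\mathcal P,\pi)$: $W$ a nonempty set, $\mathcal F$ an algebra on $W$, $\mathcal P$ a set of probability measures on $\mathcal F$, $\pi$ a truth assignment to $\Phi_0$ at each world with every $\{w:\pi(w)(p)=\text{true}\}\in\mathcal F$; $[\![\phi]\!]_M$ is the set of worlds satisfying $\phi$, $[\![\sum b_i\phi_i]\!]_M=\sum b_iX_{[\![\phi_i]\!]_M}$, and $M\models\sum a_ie(\gamma_i)\ge b$ iff $\sum a_i\underline E_{\mathcal P}([\![\gamma_i]\!]_M)\ge b$ where $\underline E_{\mathcal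 P}(X)=\inf_{\mu\in\mathcal P}E_\mu(X)$; Boolean connectives classical. $\mathcal M^{lp}$ is the class of such structures. Axioms: Taut: all instances in $\mathcal L^E$ of propositional tautologies. MP: from $f$ and $f\Rightarrow g$ infer $g$. Ineq: all instances of valid formulas about linear inequalities, i.e. Boolean combinations of inequalities $c_1x_1+\cdots+c_nx_n\ge c$ true under every assignment of reals to the variables, with each variable $x_i$ uniformly replaced by a term $e(\gamma_i)$. E5: $e(\gamma_1)\le e(\gamma_2)$ whenever $\gamma_1\le\gamma_2$ is a valid gamble inequality, i.e. $[\![\gamma_1]\!]_M(w)\le[\![\gamma_2]\!]_M(w)$ for every nonempty set of worlds with truth assignment and every world $w$. E6: $e(\gamma_1+\gamma_2)\ge e(\gamma_1)+e(\gamma_2)$. E7: $e(a\gamma+b\,\mathit{true})=ae(\gamma)+b$ for $a\ge0$. E8: $e(a\gamma+b\,\mathit{false})=ae(\gamma)$ for $a\ge0$. *)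

theory Defs
  imports "HOL-Analysis.Analysis"
begin

datatype 'p pform = Prim 'p | PNeg "'p pform" | PAnd "'p pform" "'p pform"

primrec peval :: "('p \<Rightarrow> bool) \<Rightarrow> 'p pform \<Rightarrow> bool" where
  "peval v (Prim p) = v p"
| "peval v (PNeg f) = (\<not> peval v f)"
| "peval v (PAnd f g) = (peval v f \<and> peval v g)"

definition ptrue :: "'p pform" where
  "ptrue = PNeg (PAnd (Prim undefined) (PNeg (Prim undefined)))"

definition pfalse :: "'p pform" where
  "pfalse = PNeg ptrue"

text \<open>A gamble b1 phi1 + ... + bn phin is the list of its terms.\<close>
type_synonym 'p gamble = "(int \<times> 'p pform) list"

definition gplus :: "'p gamble \<Rightarrow> 'p gamble \<Rightarrow> 'p gamble" where
  "gplus g1 g2 = g1 @ g2"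

definition gscale :: "int \<Rightarrow> 'p gamble \<Rightarrow> 'p gamble" where
  "gscale a g = map (\<lambda>(b, f). (a * b, f)) g"

definition gval :: "('p \<Rightarrow> bool) \<Rightarrow> 'p gamble \<Rightarrow> real" where
  "gval v g = (\<Sum>(b, f)\<leftarrow>g. real_of_int b * (if peval v f then 1 else 0))"

text \<open>Valid gamble inequality: holds at every world of every set of worlds with
  truth assignment; the value at a world depends only on its truth assignment.\<close>
definition gamble_le :: "'p gamble \<Rightarrow> 'p gamble \<Rightarrow> bool" where
  "gamble_le g1 g2 = (\<forall>v. gval v g1 \<le> gval v g2)"

text \<open>A term a1 e(g1) + ... + ak e(gk) is the list of pairs (ai, gi).\<close>
type_synonym 'p eterm = "(int \<times> 'p gamble) list"

datatype 'p lfml =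
    EIneq "'p eterm" int      \<comment> \<open>a1 e(g1) + ... + ak e(gk) \<ge> b\<close>
  | ENeg "'p lfml"
  | EAnd "'p lfml" "'p lfml"

definition EImp :: "'p lfml \<Rightarrow> 'p lfml \<Rightarrow> 'p lfml" where
  "EImp f g = ENeg (EAnd f (ENeg g))"

definition tneg :: "'p eterm \<Rightarrow> 'p eterm" where
  "tneg t = map (\<lambda>(a, g). (- a, g)) t"

definition tminus :: "'p eterm \<Rightarrow> 'p eterm \<Rightarrow> 'p eterm" where
  "tminus t1 t2 = t1 @ tneg t2"

definition ELe :: "'p eterm \<Rightarrow> int \<Rightarrow> 'p lfml" where
  "ELe t b = EIneq (tneg t) (- b)"

definition EEq :: "'p eterm \<Rightarrow> int \<Rightarrow> 'p lfml" where
  "EEq t b = EAnd (EIneq t b) (ELe t b)"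

definition EGeq :: "'p eterm \<Rightarrow> 'p eterm \<Rightarrow> 'p lfml" where
  "EGeq t1 t2 = EIneq (tminus t1 t2) 0"

record ('w, 'p) lp_struct =
  lpW  :: "'w set"
  lpF  :: "'w set set"
  lpP  :: "('w set \<Rightarrow> real) set"
  lpPi :: "'w \<Rightarrow> 'p \<Rightarrow> bool"

definition prob_measure_on :: "'w set \<Rightarrow> 'w set set \<Rightarrow> ('w set \<Rightarrow> real) \<Rightarrow> bool" where
  "prob_measure_on W F \<mu> \<longleftrightarrow>
     (\<forall>A\<in>F. 0 \<le> \<mu> A) \<and> \<mu> W = 1 \<and>
     (\<forall>A\<in>F. \<forall>B\<in>F. A \<inter> B = {} \<longrightarrow> \<mu> (A \<union> B) = \<mu> A + \<mu> B)"

definition lp_structure :: "('w, 'p) lp_struct \<Rightarrow> bool" where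
  "lp_structure M \<longleftrightarrow>
     lpW M \<noteq> {} \<and> algebra (lpW M) (lpF M) \<and> lpP M \<noteq> {} \<and>
     (\<forall>\<mu>\<in>lpP M. prob_measure_on (lpW M) (lpF M) \<mu>) \<and>
     (\<forall>p. {w \<in> lpW M. lpPi M w p} \<in> lpF M)"

text \<open>Expectation of a simple (finite-range) random variable X on W w.r.t. mu.\<close>
definition expect :: "'w set \<Rightarrow> ('w set \<Rightarrow> real) \<Rightarrow> ('w \<Rightarrow> real) \<Rightarrow> real" where
  "expect W \<mu> X = (\<Sum>x\<in>X ` W. x * \<mu> {w \<in> W. X w = x})"

definition lower_expect :: "('w, 'p) lp_struct \<Rightarrow> ('w \<Rightarrow> real) \<Rightarrow> real" where
  "lower_expect M X = (INF \<mu>\<in>lpP M. expect (lpW M) \<mu> X)"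

definition gsem :: "('w, 'p) lp_struct \<Rightarrow> 'p gamble \<Rightarrow> 'w \<Rightarrow> real" where
  "gsem M g = (\<lambda>w. gval (lpPi M w) g)"

primrec lsat :: "('w, 'p) lp_struct \<Rightarrow> 'p lfml \<Rightarrow> bool" where
  "lsat M (EIneq t b) =
     ((\<Sum>(a, g)\<leftarrow>t. real_of_int a * lower_expect M (gsem M g)) \<ge> real_of_int b)"
| "lsat M (ENeg f) = (\<not> lsat M f)"
| "lsat M (EAnd f g) = (lsat M f \<and> lsat M g)"

definition lp_valid :: "'w itself \<Rightarrow> 'p lfml \<Rightarrow> bool" where
  "lp_valid _ f = (\<forall>M :: ('w, 'p) lp_struct. lp_structure M \<longrightarrow> lsat M f)"

definition tautology :: "nat pform \<Rightarrow> bool" where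
  "tautology \<tau> = (\<forall>v. peval v \<tau>)"

primrec pinst :: "(nat \<Rightarrow> 'p lfml) \<Rightarrow> nat pform \<Rightarrow> 'p lfml" where
  "pinst \<sigma> (Prim i) = \<sigma> i"
| "pinst \<sigma> (PNeg f) = ENeg (pinst \<sigma> f)"
| "pinst \<sigma> (PAnd f g) = EAnd (pinst \<sigma> f) (pinst \<sigma> g)"

text \<open>Boolean combinations of linear inequalities c1 x_i1 + ... + cn x_in \<ge> c over
  real variables x_i (i :: nat), and their validity.\<close>
datatype linfml =
    LIneq "(int \<times> nat) list" int
  | LNeg linfml
  | LAnd linfml linfml

primrec linsat :: "(nat \<Rightarrow> real) \<Rightarrow> linfml \<Rightarrow> bool" where
  "linsat x (LIneq cs c) = ((\<Sum>(a, i)\<leftarrow>cs. real_of_int a * x i) \<ge> real_of_int c)"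
| "linsat x (LNeg f) = (\<not> linsat x f)"
| "linsat x (LAnd f g) = (linsat x f \<and> linsat x g)"

definition lin_valid :: "linfml \<Rightarrow> bool" where
  "lin_valid f = (\<forall>x. linsat x f)"

primrec linst :: "(nat \<Rightarrow> 'p gamble) \<Rightarrow> linfml \<Rightarrow> 'p lfml" where
  "linst \<sigma> (LIneq cs c) = EIneq (map (\<lambda>(a, i). (a, \<sigma> i)) cs) c"
| "linst \<sigma> (LNeg f) = ENeg (linst \<sigma> f)"
| "linst \<sigma> (LAnd f g) = EAnd (linst \<sigma> f) (linst \<sigma> g)"

inductive AX_lp :: "'p lfml \<Rightarrow> bool" where
  Taut: "tautology \<tau> \<Longrightarrow> AX_lp (pinst \<sigma> \<tau>)"
| MP:   "AX_lp f \<Longrightarrow> AX_lp (EImp f g) \<Longrightarrow> AX_lp g"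
| Ineq: "lin_valid \<psi> \<Longrightarrow> AX_lp (linst \<sigma> \<psi>)"
| E5:   "gamble_le g1 g2 \<Longrightarrow> AX_lp (EGeq [(1, g2)] [(1, g1)])"
| E6:   "AX_lp (EGeq [(1, gplus g1 g2)] [(1, g1), (1, g2)])"
| E7:   "a \<ge> 0 \<Longrightarrow>
         AX_lp (EEq (tminus [(1, gplus (gscale a g) [(b, ptrue)])] [(a, g)]) b)"
| E8:   "a \<ge> 0 \<Longrightarrow>
         AX_lp (EEq (tminus [(1, gplus (gscale a g) [(b, pfalse)])] [(a, g)]) 0)"

end

(*
  Soundness: on the finitely many atoms of the propositions involved, the expectation of a gamble
  is linear in the measure, so the lower expectation, an infimum of such linear functions, is
  monotone, superadditive and positively affine; these are E5 to E8.

  Completeness: read f as a Boolean combination of linear inequalities in unknowns e(gamble) and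
  fix a sign pattern of these inequalities. It gives a rational linear program whose unknowns are
  the lower expectations of the gambles and, for each gamble, a distribution on the atoms at which
  its lower expectation is attained. A rational solution is a finite lower probability structure
  realising the pattern, where f holds by validity; so if the pattern is compatible with the
  negation of f, the program is infeasible, and Fourier-Motzkin elimination gives nonnegative
  rational multipliers refuting it. Cleared of denominators, the column of each measure is a
  pointwise inequality between gambles, which E5 to E7 turn into a theorem, and these theorems
  refute the pattern by linear arithmetic. Hence an implication from finitely many theorems to f
  is an instance of Ineq, and MP gives f.
*)

theory Submission
  imports Defs
begin

section \<open>Gambles\<close>

lemma peval_ptrue [simp]: "peval v ptrue"
  by (simp add: ptrue_def)

lemma peval_pfalse [simp]: "\<not> peval v pfalse"
  by (simp add: pfalse_def)

lemma gval_Nil [simp]: "gval v [] = 0"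
  by (simp add: gval_def)

lemma gval_Cons [simp]: "gval v ((b, f) # g) = of_int b * (if peval v f then 1 else 0) + gval v g"
  by (simp add: gval_def)

lemma gval_gplus [simp]: "gval v (gplus g1 g2) = gval v g1 + gval v g2"
  by (simp add: gplus_def gval_def)

lemma gval_gscale [simp]: "gval v (gscale a g) = of_int a * gval v g"
  by (induction g) (auto simp: gscale_def algebra_simps)

definition gval_int :: "('p \<Rightarrow> bool) \<Rightarrow> 'p gamble \<Rightarrow> int" where
  "gval_int v g = (\<Sum>(b, f)\<leftarrow>g. if peval v f then b else 0)"

lemma of_int_gval_int: "of_int (gval_int v g) = gval v g"
  by (induction g) (auto simp: gval_int_def)

primrec pprops :: "'p pform \<Rightarrow> 'p set" where
  "pprops (Prim p) = {p}"
| "pprops (PNeg f) = pprops f"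
| "pprops (PAnd f g) = pprops f \<union> pprops g"

definition gprops :: "'p gamble \<Rightarrow> 'p set" where
  "gprops g = (\<Union>(b, f)\<in>set g. pprops f)"

lemma finite_pprops [simp]: "finite (pprops f)"
  by (induction f) auto

lemma finite_gprops [simp]: "finite (gprops g)"
  by (auto simp: gprops_def)

lemma gprops_gplus [simp]: "gprops (gplus g1 g2) = gprops g1 \<union> gprops g2"
  by (simp add: gplus_def gprops_def)

lemma peval_cong: "(\<And>q. q \<in> pprops f \<Longrightarrow> v q = v' q) \<Longrightarrow> peval v f = peval v' f"
  by (induction f) auto

lemma gval_cong: "(\<And>q. q \<in> gprops g \<Longrightarrow> v q = v' q) \<Longrightarrow> gval v g = gval v' g"
proof (induction g)
  case (Cons bf g)
  obtain b f where bf: "bf = (b, f)"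
    by (cases bf)
  have "peval v f = peval v' f"
    by (rule peval_cong) (use Cons.prems in \<open>auto simp: gprops_def bf\<close>)
  with Cons show ?case
    by (auto simp: gprops_def bf)
qed simp

lemma gval_restrict:
  assumes "gprops g \<subseteq> Pr"
  shows "gval v g = gval (\<lambda>q. q \<in> {q \<in> Pr. v q}) g"
  by (rule gval_cong) (use assms in auto)

section \<open>Expectations of simple functions\<close>

lemma prob_measure_on_empty:
  assumes "algebra W F" "prob_measure_on W F \<mu>"
  shows "\<mu> {} = 0"
proof -
  interpret algebra W F
    by fact
  have "\<mu> ({} \<union> {}) = \<mu> {} + \<mu> {}"
    using assms unfolding prob_measure_on_def by blast
  then show ?thesis
    by simp
qed

lemma prob_measure_on_finite_UN:
  assumes alg: "algebra W F" and pm: "prob_measure_on W F \<mu>" and "finite S"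
    and "\<And>i. i \<in> S \<Longrightarrow> C i \<in> F" and "disjoint_family_on C S"
  shows "\<mu> (\<Union>i\<in>S. C i) = (\<Sum>i\<in>S. \<mu> (C i))"
  using assms(3-)
proof (induction S rule: finite_induct)
  case empty
  then show ?case
    using prob_measure_on_empty[OF alg pm] by simp
next
  case (insert i S)
  have "C i \<inter> (\<Union>j\<in>S. C j) = {}"
    using insert.prems(2) insert.hyps(2) by (fastforce simp: disjoint_family_on_def)
  moreover have "(\<Union>j\<in>S. C j) \<in> F"
    using insert alg by (intro ring_of_sets.finite_UN) (auto simp: algebra_def)
  ultimately have "\<mu> (C i \<union> (\<Union>j\<in>S. C j)) = \<mu> (C i) + \<mu> (\<Union>j\<in>S. C j)"
    using pm insert.prems(1) unfolding prob_measure_on_def by blast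
  moreover have "disjoint_family_on C S"
    using insert.prems(2) by (rule disjoint_family_on_mono[rotated]) auto
  ultimately show ?case
    using insert by simp
qed

lemma expect_eq_sum_cells:
  assumes alg: "algebra W F" and pm: "prob_measure_on W F \<mu>" and fin: "finite Ats"
    and \<alpha>: "\<And>w. w \<in> W \<Longrightarrow> \<alpha> w \<in> Ats"
    and cells: "\<And>A. A \<in> Ats \<Longrightarrow> {w\<in>W. \<alpha> w = A} \<in> F"
    and X: "\<And>w. w \<in> W \<Longrightarrow> X w = h (\<alpha> w)"
  shows "expect W \<mu> X = (\<Sum>A\<in>Ats. h A * \<mu> {w\<in>W. \<alpha> w = A})"
proof -
  let ?C = "\<lambda>A. {w\<in>W. \<alpha> w = A}"
  have level_set: "\<mu> {w\<in>W. X w = y} = (\<Sum>A\<in>{A\<in>Ats. h A = y}. \<mu> (?C A))" for y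
  proof -
    have "{w\<in>W. X w = y} = (\<Union>A\<in>{A\<in>Ats. h A = y}. ?C A)"
      using \<alpha> X by auto
    moreover have "disjoint_family_on ?C {A\<in>Ats. h A = y}"
      by (auto simp: disjoint_family_on_def)
    ultimately show ?thesis
      using prob_measure_on_finite_UN[OF alg pm, of "{A\<in>Ats. h A = y}" ?C] fin cells by simp
  qed
  have "(\<Sum>A\<in>Ats. h A * \<mu> (?C A)) = (\<Sum>y\<in>h ` Ats. \<Sum>A\<in>{A\<in>Ats. h A = y}. h A * \<mu> (?C A))"
    using sum.image_gen[OF fin] by blast
  also have "\<dots> = (\<Sum>y\<in>h ` Ats. y * \<mu> {w\<in>W. X w = y})"
    by (intro sum.cong refl) (auto simp: level_set sum_distrib_left)
  also have "\<dots> = (\<Sum>y\<in>X ` W. y * \<mu> {w\<in>W. X w = y})"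
  proof (rule sum.mono_neutral_right)
    show "X ` W \<subseteq> h ` Ats"
      using \<alpha> X by auto
    show "\<forall>y\<in>h ` Ats - X ` W. y * \<mu> {w\<in>W. X w = y} = 0"
    proof
      fix y assume "y \<in> h ` Ats - X ` W"
      then have "{w\<in>W. X w = y} = {}"
        by blast
      then show "y * \<mu> {w\<in>W. X w = y} = 0"
        by (metis prob_measure_on_empty[OF alg pm] mult_zero_right)
    qed
  qed (use fin in simp)
  finally show ?thesis
    unfolding expect_def ..
qed

section \<open>Lower expectations of gambles\<close>

definition atom_cell :: "('w, 'p) lp_struct \<Rightarrow> 'p set \<Rightarrow> 'p set \<Rightarrow> 'w set" where
  "atom_cell M Pr A = {w \<in> lpW M. {q \<in> Pr. lpPi M w q} = A}"

lemma atom_cell_in_sets: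
  assumes M: "lp_structure M" and fin: "finite Pr"
  shows "atom_cell M Pr A \<in> lpF M"
proof -
  interpret algebra "lpW M" "lpF M"
    using M by (simp add: lp_structure_def)
  show ?thesis
  proof (cases "A \<subseteq> Pr")
    case True
    have "{w \<in> lpW M. lpPi M w q \<longleftrightarrow> q \<in> A} \<in> lpF M" for q
      using M sets_Collect_neg[of "\<lambda>w. lpPi M w q"] by (cases "q \<in> A") (auto simp: lp_structure_def)
    then have "{w \<in> lpW M. \<forall>q\<in>Pr. lpPi M w q \<longleftrightarrow> q \<in> A} \<in> lpF M"
      using fin by (intro sets_Collect_finite_All)
    moreover have "atom_cell M Pr A = {w \<in> lpW M. \<forall>q\<in>Pr. lpPi M w q \<longleftrightarrow> q \<in> A}"
      using True by (auto simp: atom_cell_def)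
    ultimately show ?thesis
      by simp
  next
    case False
    then have "atom_cell M Pr A = {}"
      by (auto simp: atom_cell_def)
    then show ?thesis
      by simp
  qed
qed

definition cell_expect :: "('w, 'p) lp_struct \<Rightarrow> 'p set \<Rightarrow> ('w set \<Rightarrow> real) \<Rightarrow> 'p gamble \<Rightarrow> real" where
  "cell_expect M Pr \<mu> g = (\<Sum>A\<in>Pow Pr. gval (\<lambda>q. q \<in> A) g * \<mu> (atom_cell M Pr A))"

lemma expect_gsem_eq_cell_expect:
  assumes M: "lp_structure M" and fin: "finite Pr" and \<mu>: "\<mu> \<in> lpP M" and g: "gprops g \<subseteq> Pr"
  shows "expect (lpW M) \<mu> (gsem M g) = cell_expect M Pr \<mu> g"
proof -
  have "algebra (lpW M) (lpF M)" "prob_measure_on (lpW M) (lpF M) \<mu>"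
    using M \<mu> by (auto simp: lp_structure_def)
  then show ?thesis
    unfolding cell_expect_def atom_cell_def
    by (rule expect_eq_sum_cells)
      (use fin atom_cell_in_sets[OF M fin] gval_restrict[OF g] in \<open>auto simp: atom_cell_def gsem_def\<close>)
qed

lemma sum_atom_cells:
  assumes M: "lp_structure M" and fin: "finite Pr" and \<mu>: "\<mu> \<in> lpP M"
  shows "(\<Sum>A\<in>Pow Pr. \<mu> (atom_cell M Pr A)) = 1"
proof -
  have "algebra (lpW M) (lpF M)" and pm: "prob_measure_on (lpW M) (lpF M) \<mu>"
    using M \<mu> by (auto simp: lp_structure_def)
  moreover have "(\<Union>A\<in>Pow Pr. atom_cell M Pr A) = lpW M"
  proof (intro equalityI subsetI)
    fix w assume "w \<in> lpW M"
    then show "w \<in> (\<Union>A\<in>Pow Pr. atom_cell M Pr A)"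
      by (intro UN_I[of "{q \<in> Pr. lpPi M w q}"]) (auto simp: atom_cell_def)
  qed (auto simp: atom_cell_def)
  moreover have "disjoint_family_on (atom_cell M Pr) (Pow Pr)"
    unfolding disjoint_family_on_def atom_cell_def by blast
  ultimately show ?thesis
    using prob_measure_on_finite_UN[of "lpW M" "lpF M" \<mu> "Pow Pr" "atom_cell M Pr"]
      fin atom_cell_in_sets[OF M fin] pm by (simp add: prob_measure_on_def)
qed

lemma atom_cell_measure_nonneg:
  assumes "lp_structure M" "finite Pr" "\<mu> \<in> lpP M"
  shows "0 \<le> \<mu> (atom_cell M Pr A)"
  using assms atom_cell_in_sets[OF assms(1,2)] by (auto simp: lp_structure_def prob_measure_on_def)

lemma atom_cell_measure_le_1:
  assumes "lp_structure M" "finite Pr" "\<mu> \<in> lpP M" "A \<subseteq> Pr"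
  shows "\<mu> (atom_cell M Pr A) \<le> 1"
proof -
  have "\<mu> (atom_cell M Pr A) \<le> (\<Sum>A\<in>Pow Pr. \<mu> (atom_cell M Pr A))"
    using assms atom_cell_measure_nonneg[OF assms(1-3)] by (intro member_le_sum) auto
  then show ?thesis
    using sum_atom_cells[OF assms(1-3)] by simp
qed

lemma bdd_below_cell_expect:
  assumes M: "lp_structure M" and fin: "finite Pr"
  shows "bdd_below ((\<lambda>\<mu>. cell_expect M Pr \<mu> g) ` lpP M)"
proof (rule bdd_belowI2)
  fix \<mu> assume \<mu>: "\<mu> \<in> lpP M"
  show "- (\<Sum>A\<in>Pow Pr. \<bar>gval (\<lambda>q. q \<in> A) g\<bar>) \<le> cell_expect M Pr \<mu> g"
    unfolding cell_expect_def sum_negf[symmetric]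
  proof (rule sum_mono)
    fix A assume "A \<in> Pow Pr"
    let ?a = "gval (\<lambda>q. q \<in> A) g" and ?m = "\<mu> (atom_cell M Pr A)"
    have "0 \<le> ?m" "?m \<le> 1"
      using \<open>A \<in> Pow Pr\<close> atom_cell_measure_nonneg[OF M fin \<mu>] atom_cell_measure_le_1[OF M fin \<mu>]
      by auto
    then show "- \<bar>?a\<bar> \<le> ?a * ?m"
      using mult_left_le[of ?m "\<bar>?a\<bar>"] mult_right_mono[of "- \<bar>?a\<bar>" ?a ?m] by linarith
  qed
qed

abbreviation lexp :: "('w, 'p) lp_struct \<Rightarrow> 'p gamble \<Rightarrow> real" where
  "lexp M g \<equiv> lower_expect M (gsem M g)"

lemma lexp_eq_INF_cell_expect:
  assumes "lp_structure M" "finite Pr" "gprops g \<subseteq> Pr"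
  shows "lexp M g = (INF \<mu>\<in>lpP M. cell_expect M Pr \<mu> g)"
  unfolding lower_expect_def using expect_gsem_eq_cell_expect[OF assms(1,2) _ assms(3)] by simp

lemma cINF_affine:
  fixes f :: "'a \<Rightarrow> real"
  assumes "A \<noteq> {}" "bdd_below (f ` A)" "0 \<le> a"
  shows "(INF x\<in>A. c + a * f x) = c + a * (INF x\<in>A. f x)"
proof -
  have "mono (\<lambda>y. c + a * y)"
    using \<open>0 \<le> a\<close> by (auto simp: mono_def mult_left_mono)
  moreover have "continuous (at_right (INF x\<in>A. f x)) (\<lambda>y. c + a * y)"
    by (intro continuous_intros)
  ultimately show ?thesis
    using continuous_at_Inf_mono[of "\<lambda>y. c + a * y" "f ` A"] assms by (simp add: image_image)
qed

lemma cINF_add_le: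
  fixes f g :: "'a \<Rightarrow> real"
  assumes "A \<noteq> {}" "bdd_below (f ` A)" "bdd_below (g ` A)"
  shows "(INF x\<in>A. f x) + (INF x\<in>A. g x) \<le> (INF x\<in>A. f x + g x)"
  using assms by (intro cINF_greatest add_mono cINF_lower) auto

lemma lexp_mono:
  assumes M: "lp_structure M" and le: "gamble_le g1 g2"
  shows "lexp M g1 \<le> lexp M g2"
proof -
  let ?Pr = "gprops g1 \<union> gprops g2"
  have "cell_expect M ?Pr \<mu> g1 \<le> cell_expect M ?Pr \<mu> g2" if "\<mu> \<in> lpP M" for \<mu>
    unfolding cell_expect_def
    using le atom_cell_measure_nonneg[OF M _ that]
    by (intro sum_mono mult_right_mono) (auto simp: gamble_le_def)
  then have "(INF \<mu>\<in>lpP M. cell_expect M ?Pr \<mu> g1) \<le> (INF \<mu>\<in>lpP M. cell_expect M ?Pr \<mu> g2)"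
    using M bdd_below_cell_expect[OF M, of ?Pr g1]
    by (intro cINF_mono) (auto simp: lp_structure_def)
  then show ?thesis
    using lexp_eq_INF_cell_expect[OF M, of ?Pr] by simp
qed

lemma lexp_superadditive:
  assumes M: "lp_structure M"
  shows "lexp M g1 + lexp M g2 \<le> lexp M (gplus g1 g2)"
proof -
  let ?Pr = "gprops g1 \<union> gprops g2"
  have "lpP M \<noteq> {}"
    using M by (simp add: lp_structure_def)
  then have "(INF \<mu>\<in>lpP M. cell_expect M ?Pr \<mu> g1) + (INF \<mu>\<in>lpP M. cell_expect M ?Pr \<mu> g2)
      \<le> (INF \<mu>\<in>lpP M. cell_expect M ?Pr \<mu> g1 + cell_expect M ?Pr \<mu> g2)"
    using bdd_below_cell_expect[OF M] by (intro cINF_add_le) auto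
  also have "\<dots> = (INF \<mu>\<in>lpP M. cell_expect M ?Pr \<mu> (gplus g1 g2))"
    unfolding cell_expect_def by (simp add: sum.distrib distrib_right)
  finally show ?thesis
    using lexp_eq_INF_cell_expect[OF M, of ?Pr] by simp
qed

lemma lexp_affine:
  assumes M: "lp_structure M" and "0 \<le> a" and h: "\<And>v. gval v h = a * gval v g + c"
  shows "lexp M h = a * lexp M g + c"
proof -
  let ?Pr = "gprops g \<union> gprops h"
  have "cell_expect M ?Pr \<mu> h = c + a * cell_expect M ?Pr \<mu> g" if "\<mu> \<in> lpP M" for \<mu>
    using sum_atom_cells[OF M _ that, of ?Pr]
    by (simp add: cell_expect_def h distrib_right sum.distrib sum_distrib_left mult.assoc
        flip: sum_distrib_left)
  then have "(INF \<mu>\<in>lpP M. cell_expect M ?Pr \<mu> h) = (INF \<mu>\<in>lpP M. c + a * cell_expect M ?Pr \<mu> g)"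
    by (rule INF_cong[OF refl])
  also have "\<dots> = c + a * (INF \<mu>\<in>lpP M. cell_expect M ?Pr \<mu> g)"
    using M bdd_below_cell_expect[OF M] \<open>0 \<le> a\<close> by (intro cINF_affine) (auto simp: lp_structure_def)
  finally show ?thesis
    using lexp_eq_INF_cell_expect[OF M, of ?Pr] by simp
qed

lemma prob_measure_on_pushforward:
  fixes emb :: "'a \<Rightarrow> 'w"
  assumes "finite Ats" "\<And>A. A \<in> Ats \<Longrightarrow> 0 \<le> p A" "(\<Sum>A\<in>Ats. p A) = 1"
  shows "prob_measure_on (emb ` Ats) (Pow (emb ` Ats)) (\<lambda>S. \<Sum>A\<in>{A\<in>Ats. emb A \<in> S}. p A)"
  unfolding prob_measure_on_def
proof (intro conjI ballI impI)
  fix S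
  show "0 \<le> (\<Sum>A\<in>{A\<in>Ats. emb A \<in> S}. p A)"
    using assms(2) by (auto intro!: sum_nonneg)
next
  have "{A\<in>Ats. emb A \<in> emb ` Ats} = Ats"
    by auto
  then show "(\<Sum>A\<in>{A\<in>Ats. emb A \<in> emb ` Ats}. p A) = 1"
    using assms(3) by simp
next
  fix S T :: "'w set" assume "S \<inter> T = {}"
  then have "{A\<in>Ats. emb A \<in> S \<union> T} = {A\<in>Ats. emb A \<in> S} \<union> {A\<in>Ats. emb A \<in> T}"
    "{A\<in>Ats. emb A \<in> S} \<inter> {A\<in>Ats. emb A \<in> T} = {}"
    by auto
  then show "(\<Sum>A\<in>{A\<in>Ats. emb A \<in> S \<union> T}. p A) = (\<Sum>A\<in>{A\<in>Ats. emb A \<in> S}. p A) + (\<Sum>A\<in>{A\<in>Ats. emb A \<in> T}. p A)"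
    using assms(1) by (simp add: sum.union_disjoint)
qed

lemma finite_lp_structure:
  fixes p :: "'i \<Rightarrow> 'p set \<Rightarrow> real"
  assumes inf: "infinite (UNIV :: 'w set)" and Pr: "finite Pr" and I: "finite I" "I \<noteq> {}"
    and p_nonneg: "\<And>i A. i \<in> I \<Longrightarrow> A \<subseteq> Pr \<Longrightarrow> 0 \<le> p i A"
    and p_sum: "\<And>i. i \<in> I \<Longrightarrow> (\<Sum>A\<in>Pow Pr. p i A) = 1"
  obtains M :: "('w, 'p) lp_struct" where "lp_structure M"
    "\<And>g. gprops g \<subseteq> Pr \<Longrightarrow> lexp M g = (INF i\<in>I. \<Sum>A\<in>Pow Pr. gval (\<lambda>q. q \<in> A) g * p i A)"
proof -
  obtain B :: "'w set" where "finite B" "card B = card (Pow Pr)"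
    using infinite_arbitrarily_large[OF inf] by blast
  then obtain emb :: "'p set \<Rightarrow> 'w" where emb: "inj_on emb (Pow Pr)"
    using card_le_inj[of "Pow Pr" B] Pr by auto
  define \<mu> where "\<mu> i S = (\<Sum>A\<in>{A\<in>Pow Pr. emb A \<in> S}. p i A)" for i S
  define M :: "('w, 'p) lp_struct" where
    "M = \<lparr>lpW = emb ` Pow Pr, lpF = Pow (emb ` Pow Pr), lpP = \<mu> ` I,
          lpPi = (\<lambda>w q. q \<in> inv_into (Pow Pr) emb w)\<rparr>"
  have "prob_measure_on (emb ` Pow Pr) (Pow (emb ` Pow Pr)) (\<mu> i)" if "i \<in> I" for i
    unfolding \<mu>_def using Pr p_nonneg[OF that] p_sum[OF that] by (intro prob_measure_on_pushforward) auto
  then have M: "lp_structure M"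
    unfolding lp_structure_def using I(2) by (auto simp: M_def algebra_Pow)
  have cell: "atom_cell M Pr A = {emb A}" if "A \<subseteq> Pr" for A
    using that emb by (auto simp: atom_cell_def M_def inj_on_eq_iff)
  have "\<mu> i {emb A} = p i A" if "A \<subseteq> Pr" for i A
  proof -
    have "{A'\<in>Pow Pr. emb A' \<in> {emb A}} = {A}"
      using that emb by (auto simp: inj_on_eq_iff)
    then show ?thesis
      by (simp add: \<mu>_def)
  qed
  then have "cell_expect M Pr (\<mu> i) g = (\<Sum>A\<in>Pow Pr. gval (\<lambda>q. q \<in> A) g * p i A)" for i g
    unfolding cell_expect_def by (intro sum.cong) (auto simp: cell)
  then have "lexp M g = (INF i\<in>I. \<Sum>A\<in>Pow Pr. gval (\<lambda>q. q \<in> A) g * p i A)" if "gprops g \<subseteq> Pr" for g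
    using lexp_eq_INF_cell_expect[OF M Pr that] by (simp add: M_def image_image)
  with M show ?thesis
    using that by blast
qed

section \<open>Soundness\<close>

definition tval :: "('p gamble \<Rightarrow> real) \<Rightarrow> 'p eterm \<Rightarrow> real" where
  "tval x t = (\<Sum>(a, g)\<leftarrow>t. of_int a * x g)"

primrec esat :: "('p gamble \<Rightarrow> real) \<Rightarrow> 'p lfml \<Rightarrow> bool" where
  "esat x (EIneq t b) = (of_int b \<le> tval x t)"
| "esat x (ENeg f) = (\<not> esat x f)"
| "esat x (EAnd f g) = (esat x f \<and> esat x g)"

lemma lsat_eq_esat: "lsat M f = esat (lexp M) f"
  by (induction f) (auto simp: tval_def)

lemma tval_Nil [simp]: "tval x [] = 0"
  by (simp add: tval_def)

lemma tval_Cons [simp]: "tval x ((a, g) # t) = of_int a * x g + tval x t"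
  by (simp add: tval_def)

lemma tval_append [simp]: "tval x (t1 @ t2) = tval x t1 + tval x t2"
  by (simp add: tval_def)

lemma tval_tneg [simp]: "tval x (tneg t) = - tval x t"
  by (induction t) (auto simp: tneg_def)

lemma esat_EImp [simp]: "esat x (EImp f g) = (esat x f \<longrightarrow> esat x g)"
  by (simp add: EImp_def)

lemma esat_EGeq [simp]: "esat x (EGeq t1 t2) = (tval x t2 \<le> tval x t1)"
  by (simp add: EGeq_def tminus_def)

lemma esat_EEq [simp]: "esat x (EEq t b) = (tval x t = of_int b)"
  by (auto simp: EEq_def ELe_def)

lemma esat_pinst: "esat x (pinst \<sigma> \<tau>) = peval (\<lambda>i. esat x (\<sigma> i)) \<tau>"
  by (induction \<tau>) auto

lemma esat_linst: "esat x (linst \<sigma> \<psi>) = linsat (\<lambda>i. x (\<sigma> i)) \<psi>"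
proof (induction \<psi>)
  case (LIneq cs c)
  have "tval x (map (\<lambda>(a, i). (a, \<sigma> i)) cs) = (\<Sum>(a, i)\<leftarrow>cs. of_int a * x (\<sigma> i))"
    by (induction cs) auto
  then show ?case
    by simp
qed auto

theorem AX_lp_sound:
  assumes "AX_lp f" and M: "lp_structure M"
  shows "lsat M f"
  unfolding lsat_eq_esat using assms(1)
proof (induction f rule: AX_lp.induct)
  case (Taut \<tau> \<sigma>)
  then show ?case
    by (simp add: esat_pinst tautology_def)
next
  case (Ineq \<psi> \<sigma>)
  then show ?case
    by (simp add: esat_linst lin_valid_def)
next
  case (E5 g1 g2)
  then show ?case
    using lexp_mono[OF M] by simp
next
  case (E6 g1 g2)
  then show ?case
    using lexp_superadditive[OF M] by simp
next
  case (E7 a g b)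
  then show ?case
    using lexp_affine[OF M, of a "gplus (gscale a g) [(b, ptrue)]" g b] by (simp add: tminus_def)
next
  case (E8 a g b)
  then show ?case
    using lexp_affine[OF M, of a "gplus (gscale a g) [(b, pfalse)]" g 0] by (simp add: tminus_def)
qed simp

section \<open>Fourier--Motzkin elimination\<close>

definition le_lt :: "bool \<Rightarrow> 'a::order \<Rightarrow> 'a \<Rightarrow> bool" where
  "le_lt s a b = (if s then a < b else a \<le> b)"

datatype ('v, 'a) constr = Constr (coeffs: "'v \<Rightarrow> 'a") (bound: 'a) (strict: bool)

definition lin :: "'v set \<Rightarrow> ('v \<Rightarrow> 'a::comm_semiring_0) \<Rightarrow> ('v \<Rightarrow> 'a) \<Rightarrow> 'a" where
  "lin V c x = (\<Sum>v\<in>V. c v * x v)"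

definition constr_sat :: "'v set \<Rightarrow> ('v \<Rightarrow> 'a::linordered_field) \<Rightarrow> ('v, 'a) constr \<Rightarrow> bool" where
  "constr_sat V x C = le_lt (strict C) (bound C) (lin V (coeffs C) x)"

inductive derivable :: "('v, 'a::linordered_field) constr set \<Rightarrow> ('v, 'a) constr \<Rightarrow> bool"
  for Cs where
  base: "C \<in> Cs \<Longrightarrow> derivable Cs C"
| add: "derivable Cs (Constr c1 d1 s1) \<Longrightarrow> derivable Cs (Constr c2 d2 s2) \<Longrightarrow>
    derivable Cs (Constr (\<lambda>v. c1 v + c2 v) (d1 + d2) (s1 \<or> s2))"
| scale: "derivable Cs (Constr c d s) \<Longrightarrow> 0 < r \<Longrightarrow> derivable Cs (Constr (\<lambda>v. r * c v) (r * d) s)"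

lemma derivable_trans:
  assumes "derivable Cs' C" "\<And>C'. C' \<in> Cs' \<Longrightarrow> derivable Cs C'"
  shows "derivable Cs C"
  using assms by (induction rule: derivable.induct) (auto intro: derivable.intros)

lemma derivable_coeff_zero:
  assumes "derivable Cs C" "\<And>C'. C' \<in> Cs \<Longrightarrow> coeffs C' u = 0"
  shows "coeffs C u = 0"
  using assms by (induction rule: derivable.induct) auto

lemma lin_insert:
  assumes "finite V" "u \<notin> V"
  shows "lin (insert u V) c (x(u := t)) = c u * t + lin V c x"
proof -
  have "(\<Sum>v\<in>V. c v * (x(u := t)) v) = (\<Sum>v\<in>V. c v * x v)"
    using assms(2) by (intro sum.cong) auto
  then show ?thesis
    using assms by (simp add: lin_def)
qed

lemma lin_lincomb: "lin V (\<lambda>v. a * c1 v + b * c2 v) x = a * lin V c1 x + b * lin V c2 x"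
  by (simp add: lin_def sum.distrib sum_distrib_left distrib_right mult.assoc)

lemma le_lt_if_less: "a < b \<Longrightarrow> le_lt s a b"
  by (simp add: le_lt_def less_imp_le)

lemma le_lt_imp_le: "le_lt s a b \<Longrightarrow> a \<le> b"
  by (auto simp: le_lt_def split: if_splits)

lemma exists_between_nonempty_bounds:
  fixes Lo Up :: "('a::linordered_field \<times> bool) set"
  assumes fin: "finite Lo" "finite Up" and ne: "Lo \<noteq> {}" "Up \<noteq> {}"
    and compat: "\<And>l s h s'. (l, s) \<in> Lo \<Longrightarrow> (h, s') \<in> Up \<Longrightarrow> le_lt (s \<or> s') l h"
  shows "\<exists>t. (\<forall>(l, s)\<in>Lo. le_lt s l t) \<and> (\<forall>(h, s)\<in>Up. le_lt s t h)"
proof -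
  define L where "L = Max (fst ` Lo)"
  define U where "U = Min (fst ` Up)"
  have L: "l \<le> L" if "(l, s) \<in> Lo" for l s
    unfolding L_def by (rule Max_ge) (use fin that in force)+
  have U: "U \<le> h" if "(h, s) \<in> Up" for h s
    unfolding U_def by (rule Min_le) (use fin that in force)+
  have "L \<in> fst ` Lo" "U \<in> fst ` Up"
    unfolding L_def U_def using fin ne by (auto intro: Max_in Min_in)
  then obtain sL sU where LU: "(L, sL) \<in> Lo" "(U, sU) \<in> Up"
    by force
  show ?thesis
  proof (cases "L < U")
    case True
    have "L < (L + U) / 2" "(L + U) / 2 < U"
      using True by (simp_all add: field_simps)
    then have "\<forall>(l, s)\<in>Lo. l < (L + U) / 2" "\<forall>(h, s)\<in>Up. (L + U) / 2 < h"
      using L U by fastforce+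
    then show ?thesis
      by (fastforce intro: le_lt_if_less)
  next
    case False
    then have "L = U"
      using le_lt_imp_le[OF compat[OF LU]] by simp
    have "le_lt s l L" if "(l, s) \<in> Lo" for l s
      using compat[OF that LU(2)] L[OF that] \<open>L = U\<close> by (auto simp: le_lt_def split: if_splits)
    moreover have "le_lt s L h" if "(h, s) \<in> Up" for h s
      using compat[OF LU(1) that] U[OF that] \<open>L = U\<close> by (auto simp: le_lt_def split: if_splits)
    ultimately show ?thesis
      by blast
  qed
qed

lemma exists_between_bounds:
  fixes Lo Up :: "('a::linordered_field \<times> bool) set"
  assumes fin: "finite Lo" "finite Up"
    and compat: "\<And>l s h s'. (l, s) \<in> Lo \<Longrightarrow> (h, s') \<in> Up \<Longrightarrow> le_lt (s \<or> s') l h"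
  shows "\<exists>t. (\<forall>(l, s)\<in>Lo. le_lt s l t) \<and> (\<forall>(h, s)\<in>Up. le_lt s t h)"
proof (cases "Lo = {} \<or> Up = {}")
  case True
  obtain t where "\<forall>(l, s)\<in>Lo. l < t" "\<forall>(h, s)\<in>Up. t < h"
  proof (cases "Lo = {}")
    case True
    have "Min (fst ` Up) \<le> h" if "(h, s) \<in> Up" for h s
      by (rule Min_le) (use fin that in force)+
    then have "Min (fst ` Up) - 1 < h" if "(h, s) \<in> Up" for h s
      using that by fastforce
    then show ?thesis
      using True that[of "Min (fst ` Up) - 1"] by fast
  next
    case False
    then have "Up = {}"
      using \<open>Lo = {} \<or> Up = {}\<close> by blast
    have "l \<le> Max (fst ` Lo)" if "(l, s) \<in> Lo" for l s
      by (rule Max_ge) (use fin that in force)+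
    then have "l < Max (fst ` Lo) + 1" if "(l, s) \<in> Lo" for l s
      using that by fastforce
    then show ?thesis
      using \<open>Up = {}\<close> that[of "Max (fst ` Lo) + 1"] by fast
  qed
  then show ?thesis
    by (fastforce intro: le_lt_if_less)
next
  case False
  then show ?thesis
    using exists_between_nonempty_bounds[OF fin _ _ compat] by blast
qed

definition combine :: "'v \<Rightarrow> ('v, 'a) constr \<Rightarrow> ('v, 'a) constr \<Rightarrow> ('v, 'a::linordered_field) constr" where
  "combine u P N = Constr (\<lambda>v. - coeffs N u * coeffs P v + coeffs P u * coeffs N v)
     (- coeffs N u * bound P + coeffs P u * bound N) (strict P \<or> strict N)"

definition eliminate :: "'v \<Rightarrow> ('v, 'a) constr set \<Rightarrow> ('v, 'a::linordered_field) constr set" where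
  "eliminate u Cs = {C \<in> Cs. coeffs C u = 0} \<union>
     (\<lambda>(P, N). combine u P N) ` ({P \<in> Cs. 0 < coeffs P u} \<times> {N \<in> Cs. coeffs N u < 0})"

lemma finite_eliminate: "finite Cs \<Longrightarrow> finite (eliminate u Cs)"
  by (simp add: eliminate_def)

lemma coeffs_eliminate: "C \<in> eliminate u Cs \<Longrightarrow> coeffs C u = 0"
  by (auto simp: eliminate_def combine_def mult.commute)

lemma derivable_eliminate:
  assumes "C \<in> eliminate u Cs"
  shows "derivable Cs C"
proof -
  have "derivable Cs (combine u P N)" if "P \<in> Cs" "N \<in> Cs" "0 < coeffs P u" "coeffs N u < 0" for P N
  proof -
    have "derivable Cs (Constr (\<lambda>v. - coeffs N u * coeffs P v) (- coeffs N u * bound P) (strict P))"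
      using derivable.scale[of Cs "coeffs P" "bound P" "strict P" "- coeffs N u"] derivable.base[OF that(1)] that(4)
      by (cases P) simp
    moreover have "derivable Cs (Constr (\<lambda>v. coeffs P u * coeffs N v) (coeffs P u * bound N) (strict N))"
      using derivable.scale[of Cs "coeffs N" "bound N" "strict N" "coeffs P u"] derivable.base[OF that(2)] that(3)
      by (cases N) simp
    ultimately show ?thesis
      unfolding combine_def by (rule derivable.add)
  qed
  with assms show ?thesis
    by (auto simp: eliminate_def intro: derivable.base)
qed

lemma le_lt_pos_iff:
  fixes a d t L :: "'a::linordered_field"
  assumes "0 < a"
  shows "le_lt s d (a * t + L) \<longleftrightarrow> le_lt s ((d - L) / a) t"
  using assms by (simp add: le_lt_def pos_divide_le_eq pos_divide_less_eq algebra_simps)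

lemma le_lt_neg_iff:
  fixes a d t L :: "'a::linordered_field"
  assumes "a < 0"
  shows "le_lt s d (a * t + L) \<longleftrightarrow> le_lt s t ((d - L) / a)"
  using assms by (simp add: le_lt_def neg_le_divide_eq neg_less_divide_eq algebra_simps)

lemma le_lt_mult_left_pos_iff:
  fixes c x y :: "'a::linordered_field"
  assumes "0 < c"
  shows "le_lt s (c * x) (c * y) \<longleftrightarrow> le_lt s x y"
  using assms by (simp add: le_lt_def)

lemma le_lt_combine_iff:
  fixes a n dP dN LP LN :: "'a::linordered_field"
  assumes "0 < a" "n < 0"
  shows "le_lt s (- n * dP + a * dN) (- n * LP + a * LN) \<longleftrightarrow> le_lt s ((dP - LP) / a) ((dN - LN) / n)"
proof -
  have "0 < a * - n"
    using assms by (simp add: mult_pos_neg)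
  have "a * - n * ((dP - LP) / a) = - n * dP + n * LP"
    using assms by (simp add: field_simps)
  moreover have "a * - n * ((dN - LN) / n) = - a * dN + a * LN"
    using assms by (simp add: field_simps)
  moreover have "le_lt s (- n * dP + n * LP) (- a * dN + a * LN) \<longleftrightarrow> le_lt s (- n * dP + a * dN) (- n * LP + a * LN)"
    by (simp add: le_lt_def algebra_simps)
  ultimately show ?thesis
    using le_lt_mult_left_pos_iff[OF \<open>0 < a * - n\<close>, of s "(dP - LP) / a" "(dN - LN) / n"] by simp
qed

definition threshold :: "'v set \<Rightarrow> ('v \<Rightarrow> 'a::linordered_field) \<Rightarrow> 'v \<Rightarrow> ('v, 'a) constr \<Rightarrow> 'a" where
  "threshold V x u C = (bound C - lin V (coeffs C) x) / coeffs C u"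

lemma constr_sat_fun_upd:
  assumes "finite V" "u \<notin> V"
  shows "coeffs C u = 0 \<Longrightarrow> constr_sat (insert u V) (x(u := t)) C \<longleftrightarrow> constr_sat V x C"
    and "0 < coeffs C u \<Longrightarrow> constr_sat (insert u V) (x(u := t)) C \<longleftrightarrow> le_lt (strict C) (threshold V x u C) t"
    and "coeffs C u < 0 \<Longrightarrow> constr_sat (insert u V) (x(u := t)) C \<longleftrightarrow> le_lt (strict C) t (threshold V x u C)"
  using assms by (simp_all add: constr_sat_def threshold_def lin_insert le_lt_pos_iff le_lt_neg_iff)

lemma constr_sat_combine:
  assumes "0 < coeffs P u" "coeffs N u < 0"
  shows "constr_sat V x (combine u P N) \<longleftrightarrow>
    le_lt (strict P \<or> strict N) (threshold V x u P) (threshold V x u N)"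
  unfolding constr_sat_def combine_def constr.sel lin_lincomb threshold_def le_lt_combine_iff[OF assms] ..

lemma eliminate_sat_extends:
  fixes x :: "'v \<Rightarrow> 'a::linordered_field"
  assumes V: "finite V" "u \<notin> V" and fin: "finite Cs"
    and sat: "\<forall>C\<in>eliminate u Cs. constr_sat V x C"
  shows "\<exists>t. \<forall>C\<in>Cs. constr_sat (insert u V) (x(u := t)) C"
proof -
  define Lo where "Lo = (\<lambda>C. (threshold V x u C, strict C)) ` {C \<in> Cs. 0 < coeffs C u}"
  define Up where "Up = (\<lambda>C. (threshold V x u C, strict C)) ` {C \<in> Cs. coeffs C u < 0}"
  have "le_lt (s \<or> s') l h" if "(l, s) \<in> Lo" "(h, s') \<in> Up" for l s h s'
  proof -
    from that(1) obtain P where P: "P \<in> Cs" "0 < coeffs P u" "(l, s) = (threshold V x u P, strict P)"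
      unfolding Lo_def by blast
    from that(2) obtain N where N: "N \<in> Cs" "coeffs N u < 0" "(h, s') = (threshold V x u N, strict N)"
      unfolding Up_def by blast
    have "combine u P N \<in> eliminate u Cs"
      using P N by (force simp: eliminate_def)
    then show ?thesis
      using sat constr_sat_combine[OF P(2) N(2)] P(3) N(3) by auto
  qed
  moreover have "finite Lo" "finite Up"
    using fin by (simp_all add: Lo_def Up_def)
  ultimately obtain t where t: "\<forall>(l, s)\<in>Lo. le_lt s l t" "\<forall>(h, s)\<in>Up. le_lt s t h"
    using exists_between_bounds by blast
  have "constr_sat (insert u V) (x(u := t)) C" if "C \<in> Cs" for C
  proof (cases "coeffs C u" "0 :: 'a" rule: linorder_cases)
    case less
    then show ?thesis
      using t(2) that by (auto simp: constr_sat_fun_upd[OF V] Up_def)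
  next
    case equal
    then show ?thesis
      using sat that by (simp add: constr_sat_fun_upd[OF V] eliminate_def)
  next
    case greater
    then show ?thesis
      using t(1) that by (auto simp: constr_sat_fun_upd[OF V] Lo_def)
  qed
  then show ?thesis
    by blast
qed

theorem fourier_motzkin:
  assumes "finite V" "finite Cs" "\<nexists>x. \<forall>C\<in>Cs. constr_sat V x C"
  shows "\<exists>c d s. derivable Cs (Constr c d s) \<and> (\<forall>v\<in>V. c v = 0) \<and> \<not> le_lt s d 0"
  using assms
proof (induction V arbitrary: Cs rule: finite_induct)
  case empty
  then obtain C where C: "C \<in> Cs" "\<not> constr_sat {} (\<lambda>_. 0) C"
    by blast
  then have "\<not> le_lt (strict C) (bound C) 0"
    by (simp add: constr_sat_def lin_def)
  moreover have "derivable Cs (Constr (coeffs C) (bound C) (strict C))"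
    using C(1) by (simp add: derivable.base)
  ultimately show ?case
    by blast
next
  case (insert u V)
  have infeasible: "\<nexists>x. \<forall>C\<in>eliminate u Cs. constr_sat V x C"
  proof
    assume "\<exists>x. \<forall>C\<in>eliminate u Cs. constr_sat V x C"
    then obtain x where "\<forall>C\<in>eliminate u Cs. constr_sat V x C"
      by blast
    then obtain t where "\<forall>C\<in>Cs. constr_sat (insert u V) (x(u := t)) C"
      using eliminate_sat_extends[OF insert.hyps insert.prems(1)] by blast
    then show False
      using insert.prems(2) by blast
  qed
  obtain c d s where cds: "derivable (eliminate u Cs) (Constr c d s)" "\<forall>v\<in>V. c v = 0" "\<not> le_lt s d 0"
    using insert.IH[OF finite_eliminate[OF insert.prems(1)] infeasible] by blast
  have "c u = 0"
    using derivable_coeff_zero[OF cds(1) coeffs_eliminate] by simp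
  then have "\<forall>v\<in>insert u V. c v = 0"
    using cds(2) by blast
  moreover have "derivable Cs (Constr c d s)"
    using cds(1) derivable_eliminate by (rule derivable_trans)
  ultimately show ?case
    using cds(3) by blast
qed

lemma derivable_nonneg_combination:
  fixes con :: "'l \<Rightarrow> ('v, 'a::linordered_field) constr"
  assumes "derivable (con ` L) C" "finite L"
  shows "\<exists>w. (\<forall>l. 0 \<le> w l) \<and> (\<forall>v. coeffs C v = (\<Sum>l\<in>L. w l * coeffs (con l) v))
    \<and> bound C = (\<Sum>l\<in>L. w l * bound (con l)) \<and> (strict C \<longrightarrow> (\<exists>l\<in>L. 0 < w l \<and> strict (con l)))"
  using assms(1)
proof (induction rule: derivable.induct)
  case (base C)
  then obtain l where "l \<in> L" "C = con l"
    by blast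
  then show ?case
    using assms(2) by (intro exI[of _ "\<lambda>l'. of_bool (l' = l)"]) (auto simp: sum_of_bool_mult_eq)
next
  case (add c1 d1 s1 c2 d2 s2)
  then obtain w1 w2 where
    w1: "\<forall>l. 0 \<le> w1 l" "\<forall>v. c1 v = (\<Sum>l\<in>L. w1 l * coeffs (con l) v)" "d1 = (\<Sum>l\<in>L. w1 l * bound (con l))"
      "s1 \<longrightarrow> (\<exists>l\<in>L. 0 < w1 l \<and> strict (con l))" and
    w2: "\<forall>l. 0 \<le> w2 l" "\<forall>v. c2 v = (\<Sum>l\<in>L. w2 l * coeffs (con l) v)" "d2 = (\<Sum>l\<in>L. w2 l * bound (con l))"
      "s2 \<longrightarrow> (\<exists>l\<in>L. 0 < w2 l \<and> strict (con l))"
    by auto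
  have "\<exists>l\<in>L. 0 < w1 l + w2 l \<and> strict (con l)" if "s1 \<or> s2"
    using that w1(1,4) w2(1,4) by (meson add_nonneg_pos add_pos_nonneg)
  with w1 w2 show ?case
    by (intro exI[of _ "\<lambda>l. w1 l + w2 l"]) (auto simp: distrib_right sum.distrib)
next
  case (scale c d s r)
  then obtain w where
    w: "\<forall>l. 0 \<le> w l" "\<forall>v. c v = (\<Sum>l\<in>L. w l * coeffs (con l) v)" "d = (\<Sum>l\<in>L. w l * bound (con l))"
      "s \<longrightarrow> (\<exists>l\<in>L. 0 < w l \<and> strict (con l))"
    by auto
  have "\<exists>l\<in>L. 0 < r * w l \<and> strict (con l)" if s
    using that w(4) \<open>0 < r\<close> by (meson mult_pos_pos)
  with w \<open>0 < r\<close> show ?case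
    by (intro exI[of _ "\<lambda>l. r * w l"]) (auto simp: sum_distrib_left mult.assoc)
qed

theorem motzkin_transposition:
  fixes con :: "'l \<Rightarrow> ('v, 'a::linordered_field) constr"
  assumes "finite V" "finite L" "\<nexists>x. \<forall>l\<in>L. constr_sat V x (con l)"
  obtains w where "\<And>l. 0 \<le> w l" "\<And>v. v \<in> V \<Longrightarrow> (\<Sum>l\<in>L. w l * coeffs (con l) v) = 0"
    "0 < (\<Sum>l\<in>L. w l * bound (con l))
     \<or> 0 \<le> (\<Sum>l\<in>L. w l * bound (con l)) \<and> (\<exists>l\<in>L. 0 < w l \<and> strict (con l))"
proof -
  have "\<nexists>x. \<forall>C\<in>con ` L. constr_sat V x C"
    using assms(3) by blast
  from fourier_motzkin[OF assms(1) finite_imageI[OF assms(2)] this]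
  obtain c d s where cds: "derivable (con ` L) (Constr c d s)" "\<forall>v\<in>V. c v = 0" "\<not> le_lt s d 0"
    by blast
  from derivable_nonneg_combination[OF cds(1) assms(2)]
  obtain w where w: "\<forall>l. 0 \<le> w l" "\<forall>v. c v = (\<Sum>l\<in>L. w l * coeffs (con l) v)"
    "d = (\<Sum>l\<in>L. w l * bound (con l))" "s \<longrightarrow> (\<exists>l\<in>L. 0 < w l \<and> strict (con l))"
    by auto
  have "0 < d \<or> 0 \<le> d \<and> s"
    using cds(3) by (cases s) (simp_all add: le_lt_def)
  then show ?thesis
    using that[of w] w cds(2) by auto
qed

lemma sum_weighted_slack_eq:
  fixes w :: "'l \<Rightarrow> 'a::comm_ring"
  assumes "\<And>v. v \<in> V \<Longrightarrow> (\<Sum>l\<in>L. w l * c l v) = 0"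
  shows "(\<Sum>l\<in>L. w l * (lin V (c l) y - d l)) = - (\<Sum>l\<in>L. w l * d l)"
proof -
  have "(\<Sum>l\<in>L. w l * lin V (c l) y) = (\<Sum>v\<in>V. (\<Sum>l\<in>L. w l * c l v) * y v)"
    by (simp add: lin_def sum_distrib_left sum_distrib_right mult.assoc sum.swap[of _ L])
  also have "\<dots> = 0"
    by (simp add: assms)
  finally show ?thesis
    by (simp add: right_diff_distrib sum_subtractf)
qed

section \<open>Consequences of finitely many theorems\<close>

definition ax_entails :: "(('p gamble \<Rightarrow> real) \<Rightarrow> bool) \<Rightarrow> bool" where
  "ax_entails P \<longleftrightarrow> (\<exists>\<Phi>. (\<forall>\<phi>\<in>set \<Phi>. AX_lp \<phi>) \<and> (\<forall>x. (\<forall>\<phi>\<in>set \<Phi>. esat x \<phi>) \<longrightarrow> P x))"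

primrec fgambles :: "'p lfml \<Rightarrow> 'p gamble list" where
  "fgambles (EIneq t b) = map snd t"
| "fgambles (ENeg f) = fgambles f"
| "fgambles (EAnd f g) = fgambles f @ fgambles g"

fun index_of :: "'a list \<Rightarrow> 'a \<Rightarrow> nat" where
  "index_of [] a = 0"
| "index_of (b # xs) a = (if b = a then 0 else Suc (index_of xs a))"

lemma nth_index_of: "a \<in> set xs \<Longrightarrow> xs ! index_of xs a = a"
  by (induction xs) auto

primrec abstr :: "'p gamble list \<Rightarrow> 'p lfml \<Rightarrow> linfml" where
  "abstr gs (EIneq t b) = LIneq (map (\<lambda>(a, g). (a, index_of gs g)) t) b"
| "abstr gs (ENeg f) = LNeg (abstr gs f)"
| "abstr gs (EAnd f g) = LAnd (abstr gs f) (abstr gs g)"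

lemma linst_abstr: "set (fgambles f) \<subseteq> set gs \<Longrightarrow> linst (\<lambda>i. gs ! i) (abstr gs f) = f"
proof (induction f)
  case (EIneq t b)
  then have "map (\<lambda>(a, i). (a, gs ! i)) (map (\<lambda>(a, g). (a, index_of gs g)) t) = t"
    by (induction t) (auto simp: nth_index_of)
  then show ?case
    by simp
qed auto

lemma linsat_abstr: "linsat y (abstr gs f) = esat (\<lambda>g. y (index_of gs g)) f"
proof (induction f)
  case (EIneq t b)
  have "(\<Sum>(a, i)\<leftarrow>map (\<lambda>(a, g). (a, index_of gs g)) t. of_int a * y i) = tval (\<lambda>g. y (index_of gs g)) t"
    by (induction t) auto
  then show ?case
    by simp
qed auto

fun EImps :: "'p lfml list \<Rightarrow> 'p lfml \<Rightarrow> 'p lfml" where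
  "EImps [] f = f"
| "EImps (\<phi> # \<Phi>) f = EImp \<phi> (EImps \<Phi> f)"

lemma esat_EImps: "esat x (EImps \<Phi> f) = ((\<forall>\<phi>\<in>set \<Phi>. esat x \<phi>) \<longrightarrow> esat x f)"
  by (induction \<Phi>) auto

lemma AX_lp_EImps_mp: "AX_lp (EImps \<Phi> f) \<Longrightarrow> \<forall>\<phi>\<in>set \<Phi>. AX_lp \<phi> \<Longrightarrow> AX_lp f"
  by (induction \<Phi>) (auto intro: AX_lp.MP)

theorem AX_lp_if_ax_entails:
  assumes "ax_entails (\<lambda>x. esat x f)"
  shows "AX_lp f"
proof -
  obtain \<Phi> where ax: "\<forall>\<phi>\<in>set \<Phi>. AX_lp \<phi>" and ent: "\<forall>x. (\<forall>\<phi>\<in>set \<Phi>. esat x \<phi>) \<longrightarrow> esat x f"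
    using assms unfolding ax_entails_def by blast
  let ?h = "EImps \<Phi> f"
  let ?gs = "fgambles ?h"
  have "lin_valid (abstr ?gs ?h)"
    unfolding lin_valid_def linsat_abstr esat_EImps using ent by blast
  then have "AX_lp (linst (\<lambda>i. ?gs ! i) (abstr ?gs ?h))"
    by (rule AX_lp.Ineq)
  then have "AX_lp ?h"
    by (simp add: linst_abstr)
  then show ?thesis
    using ax by (rule AX_lp_EImps_mp)
qed

lemma ax_entails_trivial: "(\<And>x. P x) \<Longrightarrow> ax_entails P"
  unfolding ax_entails_def by (intro exI[of _ "[]"]) simp

lemma ax_entails_AX_lp: "AX_lp \<phi> \<Longrightarrow> ax_entails (\<lambda>x. esat x \<phi>)"
  unfolding ax_entails_def by (intro exI[of _ "[\<phi>]"]) simp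

lemma ax_entails_mono: "ax_entails P \<Longrightarrow> (\<And>x. P x \<Longrightarrow> Q x) \<Longrightarrow> ax_entails Q"
  unfolding ax_entails_def by blast

lemma ax_entails_conj:
  assumes "ax_entails P" "ax_entails Q"
  shows "ax_entails (\<lambda>x. P x \<and> Q x)"
proof -
  obtain \<Phi>1 \<Phi>2 where
    "\<forall>\<phi>\<in>set \<Phi>1. AX_lp \<phi>" "\<forall>x. (\<forall>\<phi>\<in>set \<Phi>1. esat x \<phi>) \<longrightarrow> P x"
    "\<forall>\<phi>\<in>set \<Phi>2. AX_lp \<phi>" "\<forall>x. (\<forall>\<phi>\<in>set \<Phi>2. esat x \<phi>) \<longrightarrow> Q x"
    using assms unfolding ax_entails_def by blast
  then show ?thesis
    unfolding ax_entails_def by (intro exI[of _ "\<Phi>1 @ \<Phi>2"]) auto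
qed

lemma ax_entails_Ball:
  assumes "finite I" "\<And>i. i \<in> I \<Longrightarrow> ax_entails (P i)"
  shows "ax_entails (\<lambda>x. \<forall>i\<in>I. P i x)"
  using assms
proof (induction I rule: finite_induct)
  case empty
  then show ?case
    by (simp add: ax_entails_trivial)
next
  case (insert i I)
  then have "ax_entails (\<lambda>x. P i x \<and> (\<forall>i\<in>I. P i x))"
    by (intro ax_entails_conj) auto
  then show ?case
    by (rule ax_entails_mono) auto
qed

lemma ax_entails_E5: "gamble_le g1 g2 \<Longrightarrow> ax_entails (\<lambda>x. x g1 \<le> x g2)"
  using ax_entails_AX_lp[OF AX_lp.E5] by simp

lemma ax_entails_E6: "ax_entails (\<lambda>x. x g1 + x g2 \<le> x (gplus g1 g2))"
  using ax_entails_AX_lp[OF AX_lp.E6] by simp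

lemma ax_entails_E7:
  "0 \<le> a \<Longrightarrow> ax_entails (\<lambda>x. x (gplus (gscale a g) [(b, ptrue)]) = of_int a * x g + of_int b)"
  using ax_entails_AX_lp[OF AX_lp.E7] by (simp add: tminus_def tneg_def algebra_simps)

lemma ax_entails_gval_eq:
  assumes "\<And>v. gval v g1 = gval v g2"
  shows "ax_entails (\<lambda>x. x g1 = x g2)"
proof -
  have "ax_entails (\<lambda>x. x g1 \<le> x g2 \<and> x g2 \<le> x g1)"
    using assms by (intro ax_entails_conj ax_entails_E5) (simp_all add: gamble_le_def)
  then show ?thesis
    by (rule ax_entails_mono) simp
qed

lemma ax_entails_affine:
  assumes "0 \<le> a" "\<And>v. gval v h = of_int a * gval v g + of_int b"
  shows "ax_entails (\<lambda>x. x h = of_int a * x g + of_int b)"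
proof -
  have "ax_entails (\<lambda>x. x h = x (gplus (gscale a g) [(b, ptrue)])
      \<and> x (gplus (gscale a g) [(b, ptrue)]) = of_int a * x g + of_int b)"
    using assms by (intro ax_entails_conj ax_entails_gval_eq ax_entails_E7) simp_all
  then show ?thesis
    by (rule ax_entails_mono) simp
qed

lemma ax_entails_sum_le_gamble:
  assumes "finite G" "\<And>g. g \<in> G \<Longrightarrow> 0 \<le> B g"
  shows "\<exists>Z. (\<forall>v. gval v Z = (\<Sum>g\<in>G. of_int (B g) * gval v g))
    \<and> ax_entails (\<lambda>x. (\<Sum>g\<in>G. of_int (B g) * x g) \<le> x Z)"
  using assms
proof (induction G rule: finite_induct)
  case empty
  have "ax_entails (\<lambda>x. x [] = of_int 0 * x [] + of_int 0)"
    by (rule ax_entails_affine) simp_all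
  then show ?case
    by (intro exI[of _ "[]"]) (auto elim: ax_entails_mono)
next
  case (insert g G)
  then obtain Z where Z: "\<forall>v. gval v Z = (\<Sum>g\<in>G. of_int (B g) * gval v g)"
    "ax_entails (\<lambda>x. (\<Sum>g\<in>G. of_int (B g) * x g) \<le> x Z)"
    by auto
  let ?Z' = "gplus (gscale (B g) g) Z"
  have "ax_entails (\<lambda>x. ((\<Sum>g\<in>G. of_int (B g) * x g) \<le> x Z
      \<and> x (gscale (B g) g) = of_int (B g) * x g + of_int 0) \<and> x (gscale (B g) g) + x Z \<le> x ?Z')"
    using insert.prems by (intro ax_entails_conj ax_entails_affine ax_entails_E6 Z(2)) auto
  then have "ax_entails (\<lambda>x. (\<Sum>g\<in>insert g G. of_int (B g) * x g) \<le> x ?Z')"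
    by (rule ax_entails_mono) (use insert.hyps in auto)
  moreover have "\<forall>v. gval v ?Z' = (\<Sum>g\<in>insert g G. of_int (B g) * gval v g)"
    using Z(1) insert.hyps by simp
  ultimately show ?case
    by blast
qed

lemma ax_entails_int_ineq:
  assumes "finite G" "\<And>g. g \<in> G \<Longrightarrow> 0 \<le> B g" "0 \<le> \<Gamma>"
    and pointwise: "\<And>v. (\<Sum>g\<in>G. of_int (B g) * gval v g) \<le> of_int \<Gamma> * gval v h + of_int C"
  shows "ax_entails (\<lambda>x. (\<Sum>g\<in>G. of_int (B g) * x g) \<le> of_int \<Gamma> * x h + of_int C)"
proof -
  obtain Z where Z: "\<forall>v. gval v Z = (\<Sum>g\<in>G. of_int (B g) * gval v g)"
    "ax_entails (\<lambda>x. (\<Sum>g\<in>G. of_int (B g) * x g) \<le> x Z)"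
    using ax_entails_sum_le_gamble[where B = B, OF assms(1,2)] by blast
  let ?H = "gplus (gscale \<Gamma> h) [(C, ptrue)]"
  have "ax_entails (\<lambda>x. ((\<Sum>g\<in>G. of_int (B g) * x g) \<le> x Z \<and> x Z \<le> x ?H)
      \<and> x ?H = of_int \<Gamma> * x h + of_int C)"
    using Z pointwise \<open>0 \<le> \<Gamma>\<close>
    by (intro ax_entails_conj ax_entails_E5 ax_entails_E7) (auto simp: gamble_le_def)
  then show ?thesis
    by (rule ax_entails_mono) auto
qed

lemma common_denominator:
  fixes S :: "rat set"
  assumes "finite S"
  obtains D :: int and z :: "rat \<Rightarrow> int" where "0 < D" "\<And>q. q \<in> S \<Longrightarrow> of_int D * q = of_int (z q)"
proof
  let ?num = "\<lambda>q. fst (quotient_of q)" and ?den = "\<lambda>q. snd (quotient_of q)"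
  show "0 < (\<Prod>q\<in>S. ?den q)"
    by (intro prod_pos) (simp add: quotient_of_denom_pos')
  fix q assume "q \<in> S"
  have "q = of_int (?num q) / of_int (?den q)"
    by (simp add: quotient_of_div)
  then have "of_int (?den q) * q = of_int (?num q)"
    using quotient_of_denom_pos'[of q] by (simp add: eq_divide_eq mult.commute)
  then show "of_int (\<Prod>q\<in>S. ?den q) * q = of_int ((\<Prod>p\<in>S - {q}. ?den p) * ?num q)"
    using prod.remove[OF assms \<open>q \<in> S\<close>, of ?den] by (simp add: mult.assoc)
qed

lemma ax_entails_rat_ineq:
  fixes \<beta> :: "'p gamble \<Rightarrow> rat" and \<gamma> c :: rat
  assumes G: "finite G" and \<beta>: "\<And>g. g \<in> G \<Longrightarrow> 0 \<le> \<beta> g" and \<gamma>: "0 \<le> \<gamma>"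
    and pointwise: "\<And>v. (\<Sum>g\<in>G. of_rat (\<beta> g) * gval v g) \<le> of_rat \<gamma> * gval v h + of_rat c"
  shows "ax_entails (\<lambda>x. (\<Sum>g\<in>G. of_rat (\<beta> g) * x g) \<le> of_rat \<gamma> * x h + of_rat c)"
proof -
  obtain D z where D: "0 < D" and z: "\<And>q. q \<in> \<beta> ` G \<union> {\<gamma>, c} \<Longrightarrow> of_int D * q = of_int (z q)"
    using common_denominator[of "\<beta> ` G \<union> {\<gamma>, c}"] G by blast
  have real: "real_of_int (z q) = of_int D * of_rat q" if "q \<in> \<beta> ` G \<union> {\<gamma>, c}" for q
    by (metis z[OF that] of_rat_mult of_rat_of_int_eq)
  have scaled: "(\<Sum>g\<in>G. of_int (z (\<beta> g)) * y g) = of_int D * (\<Sum>g\<in>G. of_rat (\<beta> g) * y g)"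
    for y :: "'p gamble \<Rightarrow> real"
    by (simp add: sum_distrib_left real mult.assoc)
  have "0 \<le> z q" if "q \<in> \<beta> ` G \<union> {\<gamma>, c}" "0 \<le> q" for q
  proof -
    have "0 \<le> real_of_int (z q)"
      using real[OF that(1)] that(2) D by simp
    then show ?thesis
      by simp
  qed
  moreover have "(\<Sum>g\<in>G. of_int (z (\<beta> g)) * gval v g) \<le> of_int (z \<gamma>) * gval v h + of_int (z c)" for v
    using mult_left_mono[OF pointwise[of v], of "of_int D"] D
    unfolding scaled by (simp add: real distrib_left mult.assoc)
  ultimately have "ax_entails (\<lambda>x. (\<Sum>g\<in>G. of_int (z (\<beta> g)) * x g) \<le> of_int (z \<gamma>) * x h + of_int (z c))"
    using G \<beta> \<gamma> by (intro ax_entails_int_ineq) auto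
  then show ?thesis
  proof (rule ax_entails_mono)
    fix x :: "'p gamble \<Rightarrow> real"
    assume "(\<Sum>g\<in>G. of_int (z (\<beta> g)) * x g) \<le> of_int (z \<gamma>) * x h + of_int (z c)"
    then have "of_int D * (\<Sum>g\<in>G. of_rat (\<beta> g) * x g) \<le> of_int D * (of_rat \<gamma> * x h + of_rat c)"
      unfolding scaled by (simp add: real distrib_left mult.assoc)
    then show "(\<Sum>g\<in>G. of_rat (\<beta> g) * x g) \<le> of_rat \<gamma> * x h + of_rat c"
      using D by simp
  qed
qed

section \<open>The linear program of a sign condition\<close>

type_synonym 'p ecstr = "'p eterm \<times> int \<times> bool"

definition ecstr_sat :: "('p gamble \<Rightarrow> real) \<Rightarrow> 'p ecstr \<Rightarrow> bool" where
  "ecstr_sat x c = (case c of (t, b, s) \<Rightarrow> le_lt s (of_int b) (tval x t))"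

text \<open>\<open>Exp g\<close> stands for the lower expectation of \<open>g\<close>, and \<open>Prob h A\<close> for the
  probability of the atom \<open>A\<close> under a measure at which the lower expectation of \<open>h\<close> is attained.\<close>

datatype 'p lpvar = Exp "'p gamble" | Prob "'p gamble" "'p set"

datatype 'p lplabel =
    Nonneg "'p gamble" "'p set"
  | Total_ge "'p gamble"
  | Total_le "'p gamble"
  | Exp_lower "'p gamble" "'p gamble"
  | Exp_attained "'p gamble"
  | Given "'p ecstr"

fun tcoeff :: "'p eterm \<Rightarrow> 'p gamble \<Rightarrow> int" where
  "tcoeff [] g' = 0"
| "tcoeff ((a, g) # t) g' = of_bool (g' = g) * a + tcoeff t g'"

fun lp_coeffs :: "'p lplabel \<Rightarrow> 'p lpvar \<Rightarrow> 'a::ring_1" where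
  "lp_coeffs (Nonneg h A) (Prob h' A') = of_bool (h' = h) * of_bool (A' = A)"
| "lp_coeffs (Total_ge h) (Prob h' A) = of_bool (h' = h)"
| "lp_coeffs (Total_le h) (Prob h' A) = - of_bool (h' = h)"
| "lp_coeffs (Exp_lower h g) (Prob h' A) = of_bool (h' = h) * of_int (gval_int (\<lambda>q. q \<in> A) g)"
| "lp_coeffs (Exp_lower h g) (Exp g') = - of_bool (g' = g)"
| "lp_coeffs (Exp_attained h) (Prob h' A) = - of_bool (h' = h) * of_int (gval_int (\<lambda>q. q \<in> A) h)"
| "lp_coeffs (Exp_attained h) (Exp g) = of_bool (g = h)"
| "lp_coeffs (Given (t, b, s)) (Exp g) = of_int (tcoeff t g)"
| "lp_coeffs _ _ = 0"

fun lp_bound :: "'p lplabel \<Rightarrow> 'a::ring_1" where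
  "lp_bound (Total_ge h) = 1"
| "lp_bound (Total_le h) = - 1"
| "lp_bound (Given (t, b, s)) = of_int b"
| "lp_bound _ = 0"

fun lp_strict :: "'p lplabel \<Rightarrow> bool" where
  "lp_strict (Given (t, b, s)) = s"
| "lp_strict _ = False"

definition lp_constr :: "'p lplabel \<Rightarrow> ('p lpvar, 'a::linordered_field) constr" where
  "lp_constr l = Constr (lp_coeffs l) (lp_bound l) (lp_strict l)"

definition lp_vars :: "'p gamble set \<Rightarrow> 'p set \<Rightarrow> 'p lpvar set" where
  "lp_vars G Pr = Exp ` G \<union> (\<lambda>(h, A). Prob h A) ` (G \<times> Pow Pr)"

definition lp_labels :: "'p gamble set \<Rightarrow> 'p set \<Rightarrow> 'p ecstr list \<Rightarrow> 'p lplabel set" where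
  "lp_labels G Pr cl = (\<lambda>(h, A). Nonneg h A) ` (G \<times> Pow Pr) \<union> Total_ge ` G \<union> Total_le ` G
     \<union> (\<lambda>(h, g). Exp_lower h g) ` (G \<times> G) \<union> Exp_attained ` G \<union> Given ` set cl"

lemma mem_lp_labels [simp]:
  "Nonneg h A \<in> lp_labels G Pr cl \<longleftrightarrow> h \<in> G \<and> A \<subseteq> Pr"
  "Total_ge h \<in> lp_labels G Pr cl \<longleftrightarrow> h \<in> G"
  "Total_le h \<in> lp_labels G Pr cl \<longleftrightarrow> h \<in> G"
  "Exp_lower h g \<in> lp_labels G Pr cl \<longleftrightarrow> h \<in> G \<and> g \<in> G"
  "Exp_attained h \<in> lp_labels G Pr cl \<longleftrightarrow> h \<in> G"
  "Given c \<in> lp_labels G Pr cl \<longleftrightarrow> c \<in> set cl"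
  by (force simp: lp_labels_def)+

lemma finite_lp_vars: "finite G \<Longrightarrow> finite Pr \<Longrightarrow> finite (lp_vars G Pr)"
  by (simp add: lp_vars_def)

lemma finite_lp_labels: "finite G \<Longrightarrow> finite Pr \<Longrightarrow> finite (lp_labels G Pr cl)"
  by (simp add: lp_labels_def)

lemma sum_lp_vars:
  assumes "finite G" "finite Pr"
  shows "(\<Sum>v\<in>lp_vars G Pr. f v) = (\<Sum>g\<in>G. f (Exp g)) + (\<Sum>h\<in>G. \<Sum>A\<in>Pow Pr. f (Prob h A))"
proof -
  have "(\<Sum>v\<in>lp_vars G Pr. f v) = (\<Sum>g\<in>G. f (Exp g)) + (\<Sum>(h, A)\<in>G \<times> Pow Pr. f (Prob h A))"
    unfolding lp_vars_def using assms
    by (subst sum.union_disjoint) (auto simp: sum.reindex inj_on_def case_prod_beta)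
  then show ?thesis
    by (simp add: sum.cartesian_product)
qed

lemma sum_lp_labels:
  assumes "finite G" "finite Pr"
  shows "(\<Sum>l\<in>lp_labels G Pr cl. f l) =
    (\<Sum>h\<in>G. \<Sum>A\<in>Pow Pr. f (Nonneg h A)) + (\<Sum>h\<in>G. f (Total_ge h)) + (\<Sum>h\<in>G. f (Total_le h))
    + (\<Sum>h\<in>G. \<Sum>g\<in>G. f (Exp_lower h g)) + (\<Sum>h\<in>G. f (Exp_attained h)) + (\<Sum>c\<in>set cl. f (Given c))"
proof -
  have "(\<Sum>l\<in>lp_labels G Pr cl. f l) =
    (\<Sum>(h, A)\<in>G \<times> Pow Pr. f (Nonneg h A)) + (\<Sum>h\<in>G. f (Total_ge h)) + (\<Sum>h\<in>G. f (Total_le h))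
    + (\<Sum>(h, g)\<in>G \<times> G. f (Exp_lower h g)) + (\<Sum>h\<in>G. f (Exp_attained h)) + (\<Sum>c\<in>set cl. f (Given c))"
    unfolding lp_labels_def using assms
    by (subst sum.union_disjoint, auto)+ (simp add: sum.reindex inj_on_def case_prod_beta)
  then show ?thesis
    by (simp add: sum.cartesian_product)
qed

lemma lin_lp_coeffs:
  fixes y :: "'p lpvar \<Rightarrow> 'a::linordered_field"
  assumes G: "finite G" and Pr: "finite Pr"
  shows "h \<in> G \<Longrightarrow> A \<subseteq> Pr \<Longrightarrow> lin (lp_vars G Pr) (lp_coeffs (Nonneg h A)) y = y (Prob h A)"
    and "h \<in> G \<Longrightarrow> lin (lp_vars G Pr) (lp_coeffs (Total_ge h)) y = (\<Sum>A\<in>Pow Pr. y (Prob h A))"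
    and "h \<in> G \<Longrightarrow> lin (lp_vars G Pr) (lp_coeffs (Total_le h)) y = - (\<Sum>A\<in>Pow Pr. y (Prob h A))"
    and "h \<in> G \<Longrightarrow> g \<in> G \<Longrightarrow> lin (lp_vars G Pr) (lp_coeffs (Exp_lower h g)) y =
      (\<Sum>A\<in>Pow Pr. of_int (gval_int (\<lambda>q. q \<in> A) g) * y (Prob h A)) - y (Exp g)"
    and "h \<in> G \<Longrightarrow> lin (lp_vars G Pr) (lp_coeffs (Exp_attained h)) y =
      y (Exp h) - (\<Sum>A\<in>Pow Pr. of_int (gval_int (\<lambda>q. q \<in> A) h) * y (Prob h A))"
    and "lin (lp_vars G Pr) (lp_coeffs (Given (t, b, s))) y = (\<Sum>g\<in>G. of_int (tcoeff t g) * y (Exp g))"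
  using assms by (simp_all add: lin_def sum_lp_vars[OF G Pr] sum_negf mult.assoc flip: sum_distrib_left)

lemma sum_lp_labels_Prob:
  fixes w :: "'p lplabel \<Rightarrow> 'a::linordered_field"
  assumes G: "finite G" and Pr: "finite Pr" and "h \<in> G" "A \<subseteq> Pr"
  shows "(\<Sum>l\<in>lp_labels G Pr cl. w l * lp_coeffs l (Prob h A)) =
    w (Nonneg h A) + w (Total_ge h) - w (Total_le h)
    + (\<Sum>g\<in>G. w (Exp_lower h g) * of_int (gval_int (\<lambda>q. q \<in> A) g))
    - w (Exp_attained h) * of_int (gval_int (\<lambda>q. q \<in> A) h)"
  using assms by (simp add: sum_lp_labels[OF G Pr] sum_negf mult.left_commute[of "w _"] flip: sum_distrib_left)

lemma sum_tcoeff: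
  fixes z :: "'p gamble \<Rightarrow> 'a::comm_ring_1"
  assumes "finite G" "snd ` set t \<subseteq> G"
  shows "(\<Sum>g\<in>G. of_int (tcoeff t g) * z g) = (\<Sum>(a, g)\<leftarrow>t. of_int a * z g)"
  using assms(2)
proof (induction t)
  case (Cons ag t)
  then show ?case
    using assms(1) by (cases ag) (simp add: distrib_right sum.distrib mult.assoc)
qed simp

lemma le_lt_of_rat_iff: "le_lt s (of_rat a :: real) (of_rat b) \<longleftrightarrow> le_lt s a b"
  by (simp add: le_lt_def of_rat_less of_rat_less_eq)

lemma of_rat_lp_coeffs: "of_rat (lp_coeffs l v) = lp_coeffs l v"
  by (induction l v rule: lp_coeffs.induct) (simp_all add: of_rat_mult of_rat_minus)

lemma of_rat_lp_bound: "of_rat (lp_bound l) = lp_bound l"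
  by (induction l rule: lp_bound.induct) simp_all

locale sign_lp =
  fixes G :: "'p gamble set" and Pr :: "'p set" and cl :: "'p ecstr list"
  assumes finite_G: "finite G" and G_ne: "G \<noteq> {}" and finite_Pr: "finite Pr"
    and gprops_G: "\<And>g. g \<in> G \<Longrightarrow> gprops g \<subseteq> Pr"
    and gambles_cl: "\<And>t b s. (t, b, s) \<in> set cl \<Longrightarrow> snd ` set t \<subseteq> G"
begin

abbreviation "Vs \<equiv> lp_vars G Pr"
abbreviation "Ls \<equiv> lp_labels G Pr cl"

lemma lin_lp_coeffs_Given:
  fixes y :: "'p lpvar \<Rightarrow> 'a::linordered_field"
  assumes "(t, b, s) \<in> set cl"
  shows "lin Vs (lp_coeffs (Given (t, b, s))) y = (\<Sum>(a, g)\<leftarrow>t. of_int a * y (Exp g))"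
  using gambles_cl[OF assms] by (simp add: lin_lp_coeffs[OF finite_G finite_Pr] sum_tcoeff[OF finite_G])

lemma feasible_imp_lexp:
  fixes x :: "'p lpvar \<Rightarrow> rat"
  assumes inf: "infinite (UNIV :: 'w set)"
    and sat: "\<And>l. l \<in> Ls \<Longrightarrow> constr_sat Vs x (lp_constr l)"
  obtains M :: "('w, 'p) lp_struct" where "lp_structure M" "\<And>g. g \<in> G \<Longrightarrow> lexp M g = of_rat (x (Exp g))"
proof -
  have row: "le_lt (lp_strict l) (lp_bound l) (lin Vs (lp_coeffs l) x)" if "l \<in> Ls" for l
    using sat[OF that] by (simp add: constr_sat_def lp_constr_def)
  note lin = lin_lp_coeffs[OF finite_G finite_Pr]
  define E where "E h g = (\<Sum>A\<in>Pow Pr. of_int (gval_int (\<lambda>q. q \<in> A) g) * x (Prob h A))" for h g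
  have nonneg: "0 \<le> x (Prob h A)" if "h \<in> G" "A \<subseteq> Pr" for h A
    using row[of "Nonneg h A"] that by (simp add: lin le_lt_def)
  have total: "(\<Sum>A\<in>Pow Pr. x (Prob h A)) = 1" if "h \<in> G" for h
    using row[of "Total_ge h"] row[of "Total_le h"] that by (simp add: lin le_lt_def)
  have lower: "x (Exp g) \<le> E h g" if "h \<in> G" "g \<in> G" for h g
    using row[of "Exp_lower h g"] that by (simp add: lin le_lt_def E_def)
  have attained: "E g g \<le> x (Exp g)" if "g \<in> G" for g
    using row[of "Exp_attained g"] that by (simp add: lin le_lt_def E_def)
  obtain M :: "('w, 'p) lp_struct" where M: "lp_structure M"
    and lexp_M: "\<And>g. gprops g \<subseteq> Pr \<Longrightarrow>
      lexp M g = (INF h\<in>G. \<Sum>A\<in>Pow Pr. gval (\<lambda>q. q \<in> A) g * of_rat (x (Prob h A)))"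
    using finite_lp_structure[OF inf finite_Pr finite_G G_ne, of "\<lambda>h A. of_rat (x (Prob h A))"]
      nonneg total by (auto simp flip: of_rat_sum)
  have "lexp M g = of_rat (x (Exp g))" if "g \<in> G" for g
  proof -
    have "(\<Sum>A\<in>Pow Pr. gval (\<lambda>q. q \<in> A) g * of_rat (x (Prob h A))) = of_rat (E h g)" for h
      by (simp add: E_def of_rat_sum of_rat_mult flip: of_int_gval_int)
    then have "lexp M g = (INF h\<in>G. of_rat (E h g))"
      using lexp_M[OF gprops_G[OF that]] by simp
    also have "\<dots> = of_rat (x (Exp g))"
    proof (rule cInf_eq_minimum)
      have "E g g = x (Exp g)"
        using lower[OF that that] attained[OF that] by simp
      then show "of_rat (x (Exp g)) \<in> (\<lambda>h. of_rat (E h g)) ` G"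
        using that by (intro image_eqI[of _ _ g]) auto
    qed (use that lower in \<open>auto simp: of_rat_less_eq\<close>)
    finally show ?thesis .
  qed
  with M show ?thesis
    using that by blast
qed

lemma feasible_imp_model:
  fixes x :: "'p lpvar \<Rightarrow> rat"
  assumes inf: "infinite (UNIV :: 'w set)"
    and sat: "\<And>l. l \<in> Ls \<Longrightarrow> constr_sat Vs x (lp_constr l)"
  obtains M :: "('w, 'p) lp_struct" where "lp_structure M" "\<And>c. c \<in> set cl \<Longrightarrow> ecstr_sat (lexp M) c"
proof -
  obtain M :: "('w, 'p) lp_struct" where M: "lp_structure M" and lexp_G: "\<And>g. g \<in> G \<Longrightarrow> lexp M g = of_rat (x (Exp g))"
    using feasible_imp_lexp[OF inf sat] by blast
  have "ecstr_sat (lexp M) c" if "c \<in> set cl" for c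
  proof (cases c)
    case (fields t b s)
    have G_t: "snd ` set t \<subseteq> G"
      using gambles_cl that fields by blast
    have "le_lt s (of_int b) (\<Sum>(a, g)\<leftarrow>t. of_int a * x (Exp g))"
      using sat[of "Given c"] that fields by (simp add: constr_sat_def lp_constr_def lin_lp_coeffs_Given)
    moreover have "tval (lexp M) t = of_rat (\<Sum>(a, g)\<leftarrow>t. of_int a * x (Exp g))"
      using G_t by (induction t) (auto simp: lexp_G of_rat_add of_rat_mult)
    ultimately show ?thesis
      by (simp add: fields ecstr_sat_def flip: le_lt_of_rat_iff)
  qed
  with M show ?thesis
    using that by blast
qed

lemma refutation_certificate:
  fixes w :: "'p lplabel \<Rightarrow> rat"
  assumes w_nonneg: "\<And>l. 0 \<le> w l" and w_cancel: "\<And>v. v \<in> Vs \<Longrightarrow> (\<Sum>l\<in>Ls. w l * lp_coeffs l v) = 0"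
    and h: "h \<in> G"
  shows "ax_entails (\<lambda>x. (\<Sum>g\<in>G. of_rat (w (Exp_lower h g)) * x g)
    \<le> of_rat (w (Exp_attained h)) * x h + of_rat (w (Total_le h) - w (Total_ge h)))"
proof (rule ax_entails_rat_ineq[OF finite_G])
  txt \<open>The multipliers cancel the column of \<^term>\<open>Prob h A\<close> for the atom \<open>A\<close> of \<open>v\<close>.\<close>
  fix v
  let ?A = "{q \<in> Pr. v q}"
  have gval_A: "gval v g = of_int (gval_int (\<lambda>q. q \<in> ?A) g)" if "g \<in> G" for g
    using gval_restrict[OF gprops_G[OF that], of v] by (simp add: of_int_gval_int)
  have "Prob h ?A \<in> Vs"
    using h by (auto simp: lp_vars_def)
  then have "w (Nonneg h ?A) + w (Total_ge h) - w (Total_le h)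
    + (\<Sum>g\<in>G. w (Exp_lower h g) * of_int (gval_int (\<lambda>q. q \<in> ?A) g))
    - w (Exp_attained h) * of_int (gval_int (\<lambda>q. q \<in> ?A) h) = 0"
    using w_cancel sum_lp_labels_Prob[OF finite_G finite_Pr h, of ?A w cl] by simp
  then have "(\<Sum>g\<in>G. w (Exp_lower h g) * of_int (gval_int (\<lambda>q. q \<in> ?A) g))
    \<le> w (Exp_attained h) * of_int (gval_int (\<lambda>q. q \<in> ?A) h) + (w (Total_le h) - w (Total_ge h))"
    using w_nonneg[of "Nonneg h ?A"] by linarith
  then have "of_rat (\<Sum>g\<in>G. w (Exp_lower h g) * of_int (gval_int (\<lambda>q. q \<in> ?A) g))
    \<le> (of_rat (w (Exp_attained h) * of_int (gval_int (\<lambda>q. q \<in> ?A) h) + (w (Total_le h) - w (Total_ge h))) :: real)"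
    by (simp only: of_rat_less_eq)
  then show "(\<Sum>g\<in>G. of_rat (w (Exp_lower h g)) * gval v g)
    \<le> of_rat (w (Exp_attained h)) * gval v h + of_rat (w (Total_le h) - w (Total_ge h))"
    using h by (simp add: gval_A of_rat_add of_rat_mult of_rat_sum)
qed (use w_nonneg in auto)

lemma certificates_contradict_cell:
  fixes w :: "'p lplabel \<Rightarrow> rat" and x :: "'p gamble \<Rightarrow> real"
  assumes w_nonneg: "\<And>l. 0 \<le> w l" and w_cancel: "\<And>v. v \<in> Vs \<Longrightarrow> (\<Sum>l\<in>Ls. w l * lp_coeffs l v) = 0"
    and w_bound: "0 < (\<Sum>l\<in>Ls. w l * lp_bound l)
      \<or> 0 \<le> (\<Sum>l\<in>Ls. w l * lp_bound l) \<and> (\<exists>l\<in>Ls. 0 < w l \<and> lp_strict l)"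
    and cert: "\<And>h. h \<in> G \<Longrightarrow> (\<Sum>g\<in>G. of_rat (w (Exp_lower h g)) * x g)
      \<le> of_rat (w (Exp_attained h)) * x h + of_rat (w (Total_le h) - w (Total_ge h))"
    and cell: "\<And>c. c \<in> set cl \<Longrightarrow> ecstr_sat x c"
  shows False
proof -
  txt \<open>At the point \<open>y\<close> the weighted slacks \<open>F\<close> sum to \<open>-d\<close>; yet the slacks of the rows of each
    measure add up to a nonnegative number by its certificate, and those of the sign condition are
    nonnegative.\<close>
  define y where "y v = (case v of Exp g \<Rightarrow> x g | Prob h A \<Rightarrow> 0)" for v
  define F where "F l = of_rat (w l) * (lin Vs (lp_coeffs l) y - lp_bound l)" for l
  note lin = lin_lp_coeffs[OF finite_G finite_Pr, where y = y]
  have "(\<Sum>l\<in>Ls. of_rat (w l) * lp_coeffs l v) = (0 :: real)" if "v \<in> Vs" for v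
    using arg_cong[OF w_cancel[OF that], of "of_rat :: rat \<Rightarrow> real"]
    by (simp add: of_rat_sum of_rat_mult of_rat_lp_coeffs)
  then have sum_F: "(\<Sum>l\<in>Ls. F l) = - of_rat (\<Sum>l\<in>Ls. w l * lp_bound l)"
    unfolding F_def by (simp add: sum_weighted_slack_eq of_rat_sum of_rat_mult of_rat_lp_bound)
  define group where "group h = F (Total_ge h) + F (Total_le h) + (\<Sum>g\<in>G. F (Exp_lower h g)) + F (Exp_attained h)"
    for h
  have "F (Nonneg h A) = 0" if "h \<in> G" "A \<subseteq> Pr" for h A
    using that by (simp add: F_def lin y_def)
  then have "(\<Sum>l\<in>Ls. F l) = (\<Sum>h\<in>G. group h) + (\<Sum>c\<in>set cl. F (Given c))"
    by (simp add: sum_lp_labels[OF finite_G finite_Pr] group_def sum.distrib)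
  moreover have "0 \<le> group h" if "h \<in> G" for h
  proof -
    have "group h = of_rat (w (Total_le h) - w (Total_ge h)) - (\<Sum>g\<in>G. of_rat (w (Exp_lower h g)) * x g)
        + of_rat (w (Exp_attained h)) * x h"
      using that by (simp add: group_def F_def lin y_def of_rat_diff sum_negf algebra_simps)
    then show ?thesis
      using cert[OF that] by simp
  qed
  moreover have "0 \<le> F (Given c) \<and> (0 < w (Given c) \<and> lp_strict (Given c) \<longrightarrow> 0 < F (Given c))"
    if "c \<in> set cl" for c
  proof (cases c)
    case (fields t b s)
    have "lin Vs (lp_coeffs (Given c)) y = tval x t"
      using that by (simp add: fields lin_lp_coeffs_Given y_def tval_def)
    moreover have "le_lt s (of_int b) (tval x t)"
      using cell[OF that] by (simp add: fields ecstr_sat_def)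
    ultimately show ?thesis
      using w_nonneg[of "Given c"]
      by (auto simp: F_def fields le_lt_def split: if_splits intro!: mult_nonneg_nonneg mult_pos_pos)
  qed
  ultimately have "(\<Sum>l\<in>Ls. F l) \<ge> 0" "(\<exists>c\<in>set cl. 0 < w (Given c) \<and> lp_strict (Given c)) \<Longrightarrow> (\<Sum>l\<in>Ls. F l) > 0"
    by (auto intro!: sum_nonneg add_nonneg_nonneg add_nonneg_pos sum_pos2)
  moreover have "\<exists>c\<in>set cl. 0 < w (Given c) \<and> lp_strict (Given c)" if "\<exists>l\<in>Ls. 0 < w l \<and> lp_strict l"
    using that by (metis lp_strict.elims(2) mem_lp_labels(6))
  ultimately show False
    using w_bound sum_F by (auto simp flip: of_rat_less_eq of_rat_less)
qed

theorem realizable_or_refutable: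
  assumes "infinite (UNIV :: 'w set)"
  shows "(\<exists>M :: ('w, 'p) lp_struct. lp_structure M \<and> (\<forall>c\<in>set cl. ecstr_sat (lexp M) c))
    \<or> ax_entails (\<lambda>x. \<not> (\<forall>c\<in>set cl. ecstr_sat x c))"
proof (cases "\<exists>x :: 'p lpvar \<Rightarrow> rat. \<forall>l\<in>Ls. constr_sat Vs x (lp_constr l)")
  case True
  then obtain x :: "'p lpvar \<Rightarrow> rat" where x: "\<forall>l\<in>Ls. constr_sat Vs x (lp_constr l)"
    by blast
  obtain M :: "('w, 'p) lp_struct" where "lp_structure M" "\<And>c. c \<in> set cl \<Longrightarrow> ecstr_sat (lexp M) c"
    using feasible_imp_model[OF assms, of x] x by blast
  then show ?thesis
    by blast
next
  case False
  obtain w :: "'p lplabel \<Rightarrow> rat" where w: "\<And>l. 0 \<le> w l"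
    "\<And>v. v \<in> Vs \<Longrightarrow> (\<Sum>l\<in>Ls. w l * lp_coeffs l v) = 0"
    "0 < (\<Sum>l\<in>Ls. w l * lp_bound l) \<or> 0 \<le> (\<Sum>l\<in>Ls. w l * lp_bound l) \<and> (\<exists>l\<in>Ls. 0 < w l \<and> lp_strict l)"
  proof (rule motzkin_transposition[OF finite_lp_vars[OF finite_G finite_Pr] finite_lp_labels[OF finite_G finite_Pr] False])
    fix w :: "'p lplabel \<Rightarrow> rat"
    assume "\<And>l. 0 \<le> w l" "\<And>v. v \<in> Vs \<Longrightarrow> (\<Sum>l\<in>Ls. w l * coeffs (lp_constr l) v) = 0"
      "0 < (\<Sum>l\<in>Ls. w l * bound (lp_constr l))
       \<or> 0 \<le> (\<Sum>l\<in>Ls. w l * bound (lp_constr l)) \<and> (\<exists>l\<in>Ls. 0 < w l \<and> strict (lp_constr l))"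
    then show thesis
      using that[of w] by (simp add: lp_constr_def)
  qed
  have "ax_entails (\<lambda>x. \<forall>h\<in>G. (\<Sum>g\<in>G. of_rat (w (Exp_lower h g)) * x g)
    \<le> of_rat (w (Exp_attained h)) * x h + of_rat (w (Total_le h) - w (Total_ge h)))"
    using w(1,2) by (intro ax_entails_Ball finite_G refutation_certificate)
  then have "ax_entails (\<lambda>x. \<not> (\<forall>c\<in>set cl. ecstr_sat x c))"
  proof (rule ax_entails_mono)
    fix x :: "'p gamble \<Rightarrow> real"
    assume "\<forall>h\<in>G. (\<Sum>g\<in>G. of_rat (w (Exp_lower h g)) * x g)
      \<le> of_rat (w (Exp_attained h)) * x h + of_rat (w (Total_le h) - w (Total_ge h))"
    then show "\<not> (\<forall>c\<in>set cl. ecstr_sat x c)"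
      using certificates_contradict_cell[OF w, of x] by blast
  qed
  then show ?thesis
    by blast
qed

end

section \<open>Completeness\<close>

text \<open>The empty gamble keeps this set nonempty, so that a solution of the linear program yields a
  structure with at least one measure.\<close>

definition ecstr_gambles :: "'p ecstr list \<Rightarrow> 'p gamble set" where
  "ecstr_gambles cl = insert [] (\<Union>(t, b, s)\<in>set cl. snd ` set t)"

lemma sign_lp_ecstr_gambles: "sign_lp (ecstr_gambles cl) (\<Union>g\<in>ecstr_gambles cl. gprops g) cl"
  by unfold_locales (force simp: ecstr_gambles_def)+

primrec fatoms :: "'p lfml \<Rightarrow> ('p eterm \<times> int) list" where
  "fatoms (EIneq t b) = [(t, b)]"
| "fatoms (ENeg f) = fatoms f"
| "fatoms (EAnd f g) = fatoms f @ fatoms g"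

lemma esat_cong_fatoms:
  assumes "\<And>a. a \<in> set (fatoms f) \<Longrightarrow> of_int (snd a) \<le> tval x (fst a) \<longleftrightarrow> of_int (snd a) \<le> tval y (fst a)"
  shows "esat x f = esat y f"
  using assms by (induction f) auto

definition sign_cond :: "'p lfml \<Rightarrow> ('p eterm \<times> int) set \<Rightarrow> 'p ecstr list" where
  "sign_cond f T = map (\<lambda>(t, b). if (t, b) \<in> T then (t, b, False) else (tneg t, - b, True)) (fatoms f)"

lemma sign_cond_sat_iff:
  "(\<forall>c\<in>set (sign_cond f T). ecstr_sat x c) \<longleftrightarrow>
    (\<forall>a\<in>set (fatoms f). of_int (snd a) \<le> tval x (fst a) \<longleftrightarrow> a \<in> T)"
proof -
  have "ecstr_sat x (case a of (t, b) \<Rightarrow> if (t, b) \<in> T then (t, b, False) else (tneg t, - b, True))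
      \<longleftrightarrow> (of_int (snd a) \<le> tval x (fst a) \<longleftrightarrow> a \<in> T)" for a
    by (cases a) (auto simp: ecstr_sat_def le_lt_def)
  then show ?thesis
    by (simp add: sign_cond_def)
qed

theorem AX_lp_complete:
  fixes f :: "'p lfml"
  assumes inf: "infinite (UNIV :: 'w set)" and valid: "lp_valid TYPE('w) f"
  shows "AX_lp f"
proof (rule AX_lp_if_ax_entails)
  have "ax_entails (\<lambda>x. (\<forall>c\<in>set (sign_cond f T). ecstr_sat x c) \<longrightarrow> esat x f)" for T
  proof (cases "\<exists>x. (\<forall>c\<in>set (sign_cond f T). ecstr_sat x c) \<and> \<not> esat x f")
    case True
    then obtain x where x: "\<forall>c\<in>set (sign_cond f T). ecstr_sat x c" "\<not> esat x f"
      by blast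
    have "\<not> lsat M f" if "\<forall>c\<in>set (sign_cond f T). ecstr_sat (lexp M) c" for M :: "('w, 'p) lp_struct"
      using x that esat_cong_fatoms[of f x "lexp M"] by (simp add: lsat_eq_esat sign_cond_sat_iff)
    then have "ax_entails (\<lambda>x. \<not> (\<forall>c\<in>set (sign_cond f T). ecstr_sat x c))"
      using sign_lp.realizable_or_refutable[OF sign_lp_ecstr_gambles[of "sign_cond f T"] inf] valid
      by (auto simp: lp_valid_def)
    then show ?thesis
      by (rule ax_entails_mono) blast
  next
    case False
    then show ?thesis
      by (intro ax_entails_trivial) blast
  qed
  then have "ax_entails (\<lambda>x. \<forall>T\<in>Pow (set (fatoms f)). (\<forall>c\<in>set (sign_cond f T). ecstr_sat x c) \<longrightarrow> esat x f)"
    by (intro ax_entails_Ball) auto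
  then show "ax_entails (\<lambda>x. esat x f)"
  proof (rule ax_entails_mono)
    fix x assume "\<forall>T\<in>Pow (set (fatoms f)). (\<forall>c\<in>set (sign_cond f T). ecstr_sat x c) \<longrightarrow> esat x f"
    moreover have "\<forall>c\<in>set (sign_cond f {a \<in> set (fatoms f). of_int (snd a) \<le> tval x (fst a)}). ecstr_sat x c"
      by (auto simp: sign_cond_sat_iff)
    ultimately show "esat x f"
      by blast
  qed
qed

theorem theorem5p2:
  fixes f :: "'p lfml"
  shows "(AX_lp f \<longrightarrow> lp_valid TYPE('w) f) \<and>
         (infinite (UNIV :: 'v set) \<longrightarrow> lp_valid TYPE('v) f \<longrightarrow> AX_lp f)"
  using AX_lp_sound AX_lp_complete by (auto simp: lp_valid_def)

end
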